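(* (1) For disjoint finite $X,Y$, $f\in\mathrm{Bool}(X)$, $g\in\mathrm{Bool}(Y)$: $\mathcal{E}^S(f\star_1g)=\{\sim_X\sqcup\sim_Y\mid\sim_X\in\mathcal{E}^S(f),\ \sim_Y\in\mathcal{E}^S(g)\}$. (2) For $f\in\mathrm{Bool}(X)$ and equivalences $\sim\subseteq\sim'$ on $X$, the following are equivalent: (a) $\sim\in\mathcal{E}^S(f)$ and $\overline{\sim'}\in\mathcal{E}^S(f/{\sim})$; (b) $\sim'\in\mathcal{E}^S(f)$ and $\sim\in\mathcal{E}^S(f\mid\sim')$. (3) For $f\in\mathrm{Bool}(X)$: $=_X$ and $\sim_f^i$ belong to $\mathcal{E}^S(f)$; for $\sim\in\mathcal{E}^S(f)$, $f\mid\sim$ is modular iff $\sim$ is $=_X$, and $f/{\sim}$ is modular iff $\sim=\sim_f^i$. (4) The analogue of the restriction property fails: there exist finite disjoint $X,Y$, $f\in\mathrm{Bool}(X\sqcup Y)$ and equivalences $\sim_X,\sim_Y$ such that $\sim_X\in\mathcal{E}^S(f_{\mid X})$, $\sim_Y\in\mathcal{E}^S(f_{\mid Y})$ but $\sim_X\sqcup\sim_Y\notin\mathcal{E}^S(f)$, and also examples where $\sim_X\sqcup\sim_Y\in\mathcal{E}^S(f)$ but $\sim_X\notin\mathcal{E}^S(f_{\mid X})$.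
   Context: A boolean function on a finite set $X$ is a map $f:\mathcal{P}(X)\to\mathbb{Z}$ with $f(\emptyset)=0$; $\mathrm{Bool}(X)$ is their set; $f_{\mid Y}$ is the restriction to $\mathcal{P}(Y)$. For disjoint $X,Y$, $(f\star_1g)(A)=f(A\cap X)+g(A\cap Y)$ (associative, commutative, unit $1\in\mathrm{Bool}(\emptyset)$). For nonempty $X$, $f$ is indecomposable if $f=f'\star_1f''$ with $f'\in\mathrm{Bool}(X\setminus Y)$, $f''\in\mathrm{Bool}(Y)$ forces $Y\in\{\emptyset,X\}$. Each $f$ determines a unique equivalence $\sim_f^i$ with $f=\prod^{\star_1}_{Y\in X/\sim_f^i}f_{\mid Y}$ and each $f_{\mid Y}$ indecomposable; $\mathrm{ic}(f)=|X/\sim_f^i|$. $f$ is modular if $f(A)=\sum_{x\in A}f(\{x\})$ for all $A$. For an equivalence $\sim$ on $X$: $\mathrm{cl}(\sim)=|X/{\sim}|$, $\varpi_\sim$ the canonical surjection, $f/{\sim}(A)=f(\varpi_\sim^{-1}(A))$, $(f\mid\sim)(A)=\sum_{Y\in X/\sim}f(A\cap Y)$. If $\sim\subseteq\sim'$, $\overline{\sim'}$ is the equivalence on $X/{\sim}$ with $\varpi_\sim(x)\,\overline{\sim'}\,\varpi_\sim(y)\iff x\sim'y$. $=_X$ is the equality relation. $\mathcal{E}^W(f)=\{\sim:\mathrm{ic}(f\mid\sim)=\mathrm{cl}(\sim)\}$ and $\mathcal{E}^S(f)=\{\sim\in\mathcal{E}^W(f):\mathrm{ic}(f/{\sim})=\mathrm{ic}(f)\}$.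 *)

theory Defs
  imports Main
begin

(* A boolean function on X: f :: 'a set => int with f {} = 0, made extensional
   (value 0 outside Pow X) so that equality of boolean functions is meaningful. *)
definition bool_fun :: "'a set \<Rightarrow> ('a set \<Rightarrow> int) \<Rightarrow> bool" where
  "bool_fun X f \<longleftrightarrow> f {} = 0 \<and> (\<forall>A. \<not> A \<subseteq> X \<longrightarrow> f A = 0)"

definition restr :: "('a set \<Rightarrow> int) \<Rightarrow> 'a set \<Rightarrow> ('a set \<Rightarrow> int)" where
  "restr f Y = (\<lambda>A. if A \<subseteq> Y then f A else 0)"

definition star1 :: "'a set \<Rightarrow> 'a set \<Rightarrow> ('a set \<Rightarrow> int) \<Rightarrow> ('a set \<Rightarrow> int) \<Rightarrow> ('a set \<Rightarrow> int)" where
  "star1 X Y f g = (\<lambda>A. if A \<subseteq> X \<union> Y then f (A \<inter> X) + g (A \<inter> Y) else 0)"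

definition indecomposable :: "'a set \<Rightarrow> ('a set \<Rightarrow> int) \<Rightarrow> bool" where
  "indecomposable X f \<longleftrightarrow> X \<noteq> {} \<and>
     (\<forall>Y f' f''. Y \<subseteq> X \<and> bool_fun (X - Y) f' \<and> bool_fun Y f'' \<and> f = star1 (X - Y) Y f' f''
        \<longrightarrow> Y = {} \<or> Y = X)"

definition condf :: "'a set \<Rightarrow> ('a \<times> 'a) set \<Rightarrow> ('a set \<Rightarrow> int) \<Rightarrow> ('a set \<Rightarrow> int)" where
  "condf X R f = (\<lambda>A. if A \<subseteq> X then (\<Sum>Y\<in>X // R. f (A \<inter> Y)) else 0)"

definition proj :: "('a \<times> 'a) set \<Rightarrow> 'a \<Rightarrow> 'a set" where
  "proj R x = R `` {x}"

definition quotf :: "'a set \<Rightarrow> ('a \<times> 'a) set \<Rightarrow> ('a set \<Rightarrow> int) \<Rightarrow> ('a set set \<Rightarrow> int)" where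
  "quotf X R f = (\<lambda>B. if B \<subseteq> X // R then f {x \<in> X. proj R x \<in> B} else 0)"

definition ic_rel :: "'a set \<Rightarrow> ('a set \<Rightarrow> int) \<Rightarrow> ('a \<times> 'a) set" where
  "ic_rel X f = (THE R. equiv X R \<and>
      (\<forall>A. A \<subseteq> X \<longrightarrow> f A = (\<Sum>Y\<in>X // R. restr f Y (A \<inter> Y))) \<and>
      (\<forall>Y\<in>X // R. indecomposable Y (restr f Y)))"

definition ic :: "'a set \<Rightarrow> ('a set \<Rightarrow> int) \<Rightarrow> nat" where
  "ic X f = card (X // ic_rel X f)"

definition modular :: "'a set \<Rightarrow> ('a set \<Rightarrow> int) \<Rightarrow> bool" where
  "modular X f \<longleftrightarrow> (\<forall>A. A \<subseteq> X \<longrightarrow> f A = (\<Sum>x\<in>A. f {x}))"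

definition cl :: "'a set \<Rightarrow> ('a \<times> 'a) set \<Rightarrow> nat" where
  "cl X R = card (X // R)"

definition bar_rel :: "'a set \<Rightarrow> ('a \<times> 'a) set \<Rightarrow> ('a \<times> 'a) set \<Rightarrow> ('a set \<times> 'a set) set" where
  "bar_rel X R R' = {(proj R x, proj R y) | x y. x \<in> X \<and> y \<in> X \<and> (x, y) \<in> R'}"

definition EW :: "'a set \<Rightarrow> ('a set \<Rightarrow> int) \<Rightarrow> ('a \<times> 'a) set set" where
  "EW X f = {R. equiv X R \<and> ic X (condf X R f) = cl X R}"

definition ES :: "'a set \<Rightarrow> ('a set \<Rightarrow> int) \<Rightarrow> ('a \<times> 'a) set set" where
  "ES X f = {R \<in> EW X f. ic (X // R) (quotf X R f) = ic X f}"

end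

theory Submission
  imports Defs "HOL-Library.Disjoint_Sets"
begin

(*
  Call S \<subseteq> X a separator of f if f A = f (A \<inter> S) + f (A - S) for all A \<subseteq> X, i.e. if f
  splits as a star_1-product along S.  Separators are closed under complements and transitive, so
  the minimal nonempty ones (the inseparable sets) partition X; they are the classes of ~_f^i, and
  ic is additive over every partition of X into separators.

  R \<in> EW(f) says exactly that every class of R is inseparable.  Then R refines ~_f^i, each
  component C of f is a union of R-classes, and ic (f/R) is the sum over the components C of the
  ic of f/R restricted to the R-classes inside C.  Each summand is at least 1, so
  ic f \<le> ic (f/R), with equality iff every component is inseparable in the quotient.  All parts
  of the theorem reduce to this count: equality of two such sums of terms \<ge> 1 forces every
  term to be 1, and modularity means that all singletons are separators, which determines R by
  counting classes.
*)

section \<open>Separators\<close>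

definition separator :: "'a set \<Rightarrow> ('a set \<Rightarrow> int) \<Rightarrow> 'a set \<Rightarrow> bool" where
  "separator X f S \<longleftrightarrow> S \<subseteq> X \<and> (\<forall>A. A \<subseteq> X \<longrightarrow> f A = f (A \<inter> S) + f (A - S))"

definition inseparable :: "'a set \<Rightarrow> ('a set \<Rightarrow> int) \<Rightarrow> bool" where
  "inseparable Y f \<longleftrightarrow> Y \<noteq> {} \<and> (\<forall>T. separator Y f T \<longrightarrow> T = {} \<or> T = Y)"

lemma separator_space: "f {} = 0 \<Longrightarrow> separator X f X"
  unfolding separator_def by (auto simp: Int_absorb2 Diff_eq_empty_iff[THEN iffD2])

lemma separator_Diff: "separator X f S \<Longrightarrow> separator X f (X - S)"
  unfolding separator_def
proof (intro conjI allI impI)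
  fix A assume "S \<subseteq> X \<and> (\<forall>A. A \<subseteq> X \<longrightarrow> f A = f (A \<inter> S) + f (A - S))" "A \<subseteq> X"
  moreover have "A \<inter> (X - S) = A - S" "A - (X - S) = A \<inter> S" using \<open>A \<subseteq> X\<close> by auto
  ultimately show "f A = f (A \<inter> (X - S)) + f (A - (X - S))" by simp
qed auto

lemma separator_trans:
  assumes XS: "separator X f S" and ST: "separator S f T"
  shows "separator X f T"
  unfolding separator_def
proof (intro conjI allI impI)
  have TS: "T \<subseteq> S" and SX: "S \<subseteq> X" using assms by (auto simp: separator_def)
  then show "T \<subseteq> X" by blast
  fix A assume A: "A \<subseteq> X"
  have "A - T \<subseteq> X" using A by blast
  have "A \<inter> S \<inter> T = A \<inter> T" "(A - T) \<inter> S = A \<inter> S - T" "A - T - S = A - S"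
    using TS by auto
  moreover have "f A = f (A \<inter> S) + f (A - S)" "f (A - T) = f ((A - T) \<inter> S) + f (A - T - S)"
    using XS A \<open>A - T \<subseteq> X\<close> unfolding separator_def by blast+
  moreover have "f (A \<inter> S) = f (A \<inter> S \<inter> T) + f (A \<inter> S - T)"
    using ST by (auto simp: separator_def)
  ultimately show "f A = f (A \<inter> T) + f (A - T)" by simp
qed

lemma separator_Int:
  assumes "separator X f S" "Y \<subseteq> X"
  shows "separator Y f (S \<inter> Y)"
  unfolding separator_def
proof (intro conjI allI impI)
  fix A assume "A \<subseteq> Y"
  then have "A \<inter> (S \<inter> Y) = A \<inter> S" "A - S \<inter> Y = A - S" by auto
  then show "f A = f (A \<inter> (S \<inter> Y)) + f (A - S \<inter> Y)"
    using assms \<open>A \<subseteq> Y\<close> by (auto simp: separator_def)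
qed auto

lemma separator_cong:
  assumes "\<And>A. A \<subseteq> X \<Longrightarrow> f A = g A"
  shows "separator X f S \<longleftrightarrow> separator X g S"
proof -
  have "f A = f (A \<inter> S) + f (A - S) \<longleftrightarrow> g A = g (A \<inter> S) + g (A - S)" if "A \<subseteq> X" for A
  proof -
    have "A \<inter> S \<subseteq> X" "A - S \<subseteq> X" using that by auto
    then show ?thesis using assms that by simp
  qed
  then show ?thesis unfolding separator_def by blast
qed

lemma inseparable_cong:
  "(\<And>A. A \<subseteq> X \<Longrightarrow> f A = g A) \<Longrightarrow> inseparable X f \<longleftrightarrow> inseparable X g"
  unfolding inseparable_def using separator_cong[of X f g] by simp

lemma inseparable_subset_or_disjoint:
  assumes "separator X f S" "Y \<subseteq> X" "inseparable Y f"
  shows "Y \<subseteq> S \<or> Y \<inter> S = {}"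
  using separator_Int[OF assms(1,2)] assms(3) unfolding inseparable_def by blast

lemma inseparable_singleton: "inseparable {a} f"
  unfolding inseparable_def separator_def by auto

lemma separator_mem_iff:
  assumes T: "separator Y f T" and "a \<in> Y" "b \<in> Y" and f_ab: "f {a, b} \<noteq> f {a} + f {b}"
  shows "a \<in> T \<longleftrightarrow> b \<in> T"
proof -
  have split: "f {x, y} = f {x} + f {y}" if "x \<in> T" "y \<notin> T" "x \<in> Y" "y \<in> Y" for x y
  proof -
    have "{x, y} \<inter> T = {x}" "{x, y} - T = {y}" "{x, y} \<subseteq> Y" using that by auto
    then show ?thesis using T unfolding separator_def by metis
  qed
  show ?thesis
    using split[of a b] split[of b a] assms by (auto simp: insert_commute add.commute)
qed

lemma indecomposable_restr_iff:
  assumes f0: "f {} = 0"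
  shows "indecomposable Y (restr f Y) \<longleftrightarrow> inseparable Y f"
proof -
  have "separator Y f T \<longleftrightarrow> (\<exists>f' f''. bool_fun (Y - T) f' \<and> bool_fun T f'' \<and>
      restr f Y = star1 (Y - T) T f' f'')" if T: "T \<subseteq> Y" for T
  proof
    assume sep: "separator Y f T"
    have "restr f Y A = star1 (Y - T) T (restr f (Y - T)) (restr f T) A" for A
    proof (cases "A \<subseteq> Y")
      case True
      then have "A \<inter> (Y - T) = A - T" by auto
      then show ?thesis using True sep T unfolding restr_def star1_def separator_def
        by (auto simp: Un_absorb2 Int_commute)
    qed (use T in \<open>auto simp: restr_def star1_def Un_absorb2\<close>)
    moreover have "bool_fun (Y - T) (restr f (Y - T))" "bool_fun T (restr f T)"
      using f0 by (auto simp: bool_fun_def restr_def)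
    ultimately show "\<exists>f' f''. bool_fun (Y - T) f' \<and> bool_fun T f'' \<and>
        restr f Y = star1 (Y - T) T f' f''" by blast
  next
    assume "\<exists>f' f''. bool_fun (Y - T) f' \<and> bool_fun T f'' \<and> restr f Y = star1 (Y - T) T f' f''"
    then obtain f' f'' where bf: "bool_fun (Y - T) f'" "bool_fun T f''"
      and eq: "restr f Y = star1 (Y - T) T f' f''" by blast
    have val: "f A = f' (A \<inter> (Y - T)) + f'' (A \<inter> T)" if "A \<subseteq> Y" for A
      using fun_cong[OF eq, of A] that T by (simp add: restr_def star1_def Un_absorb2)
    show "separator Y f T" unfolding separator_def
    proof (intro conjI allI impI)
      fix A assume A: "A \<subseteq> Y"
      have "A \<inter> T \<inter> (Y - T) = {}" "A \<inter> T \<inter> T = A \<inter> T" "(A - T) \<inter> T = {}"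
        "(A - T) \<inter> (Y - T) = A \<inter> (Y - T)" using A by auto
      moreover have "f' {} = 0" "f'' {} = 0" using bf by (simp_all add: bool_fun_def)
      moreover have "A \<inter> T \<subseteq> Y" "A - T \<subseteq> Y" using A by auto
      ultimately have "f (A \<inter> T) = f'' (A \<inter> T)" "f (A - T) = f' (A \<inter> (Y - T))"
        using val by simp_all
      then show "f A = f (A \<inter> T) + f (A - T)" using val[OF A] by simp
    qed (rule T)
  qed
  moreover have "separator Y f T \<Longrightarrow> T \<subseteq> Y" for T by (simp add: separator_def)
  ultimately show ?thesis unfolding indecomposable_def inseparable_def by meson
qed

section \<open>Components\<close>

lemma separator_Union_sum:
  assumes "finite P" "disjoint P" "\<forall>Y\<in>P. separator X f Y" "f {} = 0" "A \<subseteq> X"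
  shows "f (A \<inter> \<Union>P) = (\<Sum>Y\<in>P. f (A \<inter> Y))"
  using assms
proof (induction P rule: finite_induct)
  case (insert Y P)
  have "disjoint P" using insert.prems by (simp add: pairwise_insert)
  then have IH: "f (A \<inter> \<Union>P) = (\<Sum>Y\<in>P. f (A \<inter> Y))" using insert by simp
  have "Y \<inter> \<Union>P = {}"
    using insert.prems insert.hyps by (auto simp: pairwise_insert disjnt_def)
  then have "A \<inter> \<Union>(insert Y P) \<inter> Y = A \<inter> Y" "A \<inter> \<Union>(insert Y P) - Y = A \<inter> \<Union>P" by auto
  moreover have "A \<inter> \<Union>(insert Y P) \<subseteq> X" "separator X f Y" using insert.prems by auto
  then have "f (A \<inter> \<Union>(insert Y P)) = f (A \<inter> \<Union>(insert Y P) \<inter> Y) + f (A \<inter> \<Union>(insert Y P) - Y)"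
    unfolding separator_def by blast
  ultimately show ?case using insert.hyps IH by simp
qed simp

lemma separators_iff_sum:
  assumes fin: "finite X" and P: "partition_on X P" and f0: "f {} = 0"
  shows "(\<forall>Y\<in>P. separator X f Y) \<longleftrightarrow> (\<forall>A. A \<subseteq> X \<longrightarrow> f A = (\<Sum>Y\<in>P. f (A \<inter> Y)))"
proof
  assume "\<forall>Y\<in>P. separator X f Y"
  moreover have "finite P" "disjoint P" "\<Union>P = X"
    using finite_elements[OF fin P] P by (auto simp: partition_on_def)
  moreover have "A \<inter> X = A" if "A \<subseteq> X" for A using that by blast
  ultimately show "\<forall>A. A \<subseteq> X \<longrightarrow> f A = (\<Sum>Y\<in>P. f (A \<inter> Y))"
    using separator_Union_sum[of P X f] f0 by metis
next
  assume sum: "\<forall>A. A \<subseteq> X \<longrightarrow> f A = (\<Sum>Y\<in>P. f (A \<inter> Y))"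
  have fP: "finite P" using finite_elements[OF fin P] .
  show "\<forall>Y\<in>P. separator X f Y" unfolding separator_def
  proof (intro ballI allI impI conjI)
    fix Y assume Y: "Y \<in> P"
    then show "Y \<subseteq> X" using P by (auto simp: partition_on_def)
    fix A assume A: "A \<subseteq> X"
    have disj: "Z \<inter> Y = {}" if "Z \<in> P - {Y}" for Z
      using P Y that by (auto simp: partition_on_def pairwise_def disjnt_def)
    have "f A = f (A \<inter> Y) + (\<Sum>Z\<in>P - {Y}. f (A \<inter> Z))"
      using sum[rule_format, OF A] sum.remove[OF fP Y] by simp
    also have "(\<Sum>Z\<in>P - {Y}. f (A \<inter> Z)) = (\<Sum>Z\<in>P - {Y}. f ((A - Y) \<inter> Z))"
      using disj by (intro sum.cong refl arg_cong[where f = f]) blast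
    also have "\<dots> = (\<Sum>Z\<in>P. f ((A - Y) \<inter> Z))"
    proof -
      have "(A - Y) \<inter> Y = {}" by blast
      then show ?thesis using sum.remove[OF fP Y, of "\<lambda>Z. f ((A - Y) \<inter> Z)"] f0 by simp
    qed
    also have "\<dots> = f (A - Y)" using sum A by (metis Diff_subset subset_trans)
    finally show "f A = f (A \<inter> Y) + f (A - Y)" .
  qed
qed

lemma partition_on_Un:
  assumes "X \<inter> Y = {}" "partition_on X P" "partition_on Y Q"
  shows "partition_on (X \<union> Y) (P \<union> Q)"
  using assms disjoint_union[of P Q] by (auto simp: partition_on_def)

definition component_partition :: "'a set \<Rightarrow> ('a set \<Rightarrow> int) \<Rightarrow> 'a set set \<Rightarrow> bool" where
  "component_partition X f P \<longleftrightarrow> partition_on X P \<and> (\<forall>Y\<in>P. separator X f Y \<and> inseparable Y f)"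

lemma component_partition_unique:
  assumes "component_partition X f P" "component_partition X f Q"
  shows "P = Q"
proof -
  have "Y \<in> Q" if P: "component_partition X f P" and Q: "component_partition X f Q" and Y: "Y \<in> P"
    for P Q Y
  proof -
    have pP: "partition_on X P" and pQ: "partition_on X Q"
      using P Q by (simp_all add: component_partition_def)
    have "Y \<noteq> {}" "Y \<subseteq> X" using pP Y by (auto simp: partition_on_def)
    then obtain y where y: "y \<in> Y" "y \<in> X" by blast
    have "X = \<Union>Q" using pQ by (simp add: partition_on_def)
    then obtain Z where Z: "Z \<in> Q" "y \<in> Z" using y by blast
    have "Z \<subseteq> X" using pQ Z by (auto simp: partition_on_def)
    have "separator X f Y" "inseparable Y f" "separator X f Z" "inseparable Z f"
      using P Q Y Z by (simp_all add: component_partition_def)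
    then have "Y \<subseteq> Z \<or> Y \<inter> Z = {}" "Z \<subseteq> Y \<or> Z \<inter> Y = {}"
      using inseparable_subset_or_disjoint \<open>Y \<subseteq> X\<close> \<open>Z \<subseteq> X\<close> by metis+
    then have "Y = Z" using y Z by blast
    then show "Y \<in> Q" using Z by simp
  qed
  then show ?thesis using assms by (intro equalityI subsetI)
qed

lemma component_partition_exists:
  assumes "finite X" and f0: "f {} = 0"
  shows "\<exists>P. component_partition X f P"
  using \<open>finite X\<close>
proof (induction X rule: finite_psubset_induct)
  case (psubset X)
  have "X = {} \<or> inseparable X f \<or> (\<exists>T. separator X f T \<and> T \<noteq> {} \<and> T \<noteq> X)"
    unfolding inseparable_def by blast
  then consider "X = {}" | "inseparable X f" | T where "separator X f T" "T \<noteq> {}" "T \<noteq> X"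
    by blast
  then show ?case
  proof cases
    case 1
    then have "component_partition X f {}" by (simp add: component_partition_def partition_on_empty)
    then show ?thesis ..
  next
    case 2
    moreover have "X \<noteq> {}" using 2 by (simp add: inseparable_def)
    ultimately have "component_partition X f {X}"
      by (simp add: component_partition_def partition_on_space separator_space f0)
    then show ?thesis ..
  next
    case (3 T)
    have T': "separator X f (X - T)" using separator_Diff[OF 3(1)] .
    have "T \<subset> X" "X - T \<subset> X" using 3 by (auto simp: separator_def)
    obtain P1 where P1: "component_partition T f P1" using psubset.IH[OF \<open>T \<subset> X\<close>] ..
    obtain P2 where P2: "component_partition (X - T) f P2" using psubset.IH[OF \<open>X - T \<subset> X\<close>] ..
    have "partition_on (T \<union> (X - T)) (P1 \<union> P2)"
      using P1 P2 by (intro partition_on_Un) (auto simp: component_partition_def)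
    moreover have "T \<union> (X - T) = X" using \<open>T \<subset> X\<close> by blast
    moreover have "separator X f Y" if "Y \<in> P1 \<union> P2" for Y
    proof -
      have "separator T f Y \<or> separator (X - T) f Y"
        using that P1 P2 by (auto simp: component_partition_def)
      then show ?thesis using separator_trans[OF 3(1)] separator_trans[OF T'] by blast
    qed
    ultimately have "component_partition X f (P1 \<union> P2)"
      using P1 P2 unfolding component_partition_def by auto
    then show ?thesis ..
  qed
qed

definition part_rel :: "'a set set \<Rightarrow> ('a \<times> 'a) set" where
  "part_rel P = {(x, y). \<exists>p\<in>P. x \<in> p \<and> y \<in> p}"

lemma equiv_part_rel: "partition_on X P \<Longrightarrow> equiv X (part_rel P)"
  unfolding part_rel_def by (rule equiv_partition_on)

lemma quotient_part_rel: "partition_on X P \<Longrightarrow> X // part_rel P = P"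
  unfolding part_rel_def by (rule partition_on_eq_quotient)

lemma part_rel_quotient:
  assumes R: "equiv X R" shows "part_rel (X // R) = R"
  unfolding part_rel_def
proof safe
  fix x y assume xy: "(x, y) \<in> R"
  then have "x \<in> X" using R equiv_type by blast
  then have "R `` {x} \<in> X // R" "x \<in> R `` {x}" using quotientI equiv_class_self[OF R] by auto
  then show "\<exists>p\<in>X // R. x \<in> p \<and> y \<in> p" using xy by blast
next
  fix x y p assume "p \<in> X // R" "x \<in> p" "y \<in> p"
  then show "(x, y) \<in> R" using R in_quotient_imp_in_rel by fastforce
qed

lemma ic_rel_condition_iff:
  assumes "finite X" "f {} = 0"
  shows "(equiv X R \<and> (\<forall>A. A \<subseteq> X \<longrightarrow> f A = (\<Sum>Y\<in>X // R. restr f Y (A \<inter> Y))) \<and>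
      (\<forall>Y\<in>X // R. indecomposable Y (restr f Y))) \<longleftrightarrow> equiv X R \<and> component_partition X f (X // R)"
proof (cases "equiv X R")
  case True
  have "restr f Y (A \<inter> Y) = f (A \<inter> Y)" for Y A by (simp add: restr_def)
  then show ?thesis
    using separators_iff_sum[of X "X // R" f, OF assms(1) partition_on_quotient[OF True] assms(2)]
      indecomposable_restr_iff[of f, OF assms(2)] partition_on_quotient[OF True]
    by (simp add: component_partition_def ball_conj_distrib)
qed simp

lemma
  assumes "finite X" "f {} = 0"
  shows equiv_ic_rel: "equiv X (ic_rel X f)"
    and component_partition_ic_rel: "component_partition X f (X // ic_rel X f)"
proof -
  obtain P where P: "component_partition X f P" using component_partition_exists[of X f, OF assms] ..
  then have "partition_on X P" by (simp add: component_partition_def)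
  then have "equiv X (part_rel P) \<and> component_partition X f (X // part_rel P)"
    using P equiv_part_rel quotient_part_rel by metis
  moreover have "R = part_rel P" if "equiv X R \<and> component_partition X f (X // R)" for R
    using that component_partition_unique[OF P] part_rel_quotient by metis
  ultimately have "ic_rel X f = part_rel P"
    unfolding ic_rel_def ic_rel_condition_iff[of X f, OF assms] by (rule the_equality)
  with \<open>equiv X (part_rel P) \<and> _\<close>
  show "equiv X (ic_rel X f)" "component_partition X f (X // ic_rel X f)" by simp_all
qed

lemma quotient_ic_rel:
  "finite X \<Longrightarrow> f {} = 0 \<Longrightarrow> component_partition X f P \<Longrightarrow> X // ic_rel X f = P"
  using component_partition_unique component_partition_ic_rel by metis

lemma ic_eq_card:
  "finite X \<Longrightarrow> f {} = 0 \<Longrightarrow> component_partition X f P \<Longrightarrow> ic X f = card P"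
  by (simp add: ic_def quotient_ic_rel)

lemma ic_rel_cong:
  assumes "\<And>A. A \<subseteq> X \<Longrightarrow> f A = g A"
  shows "ic_rel X f = ic_rel X g"
proof -
  have "restr f Y = restr g Y" if "equiv X R" "Y \<in> X // R" for R Y
    using assms in_quotient_imp_subset[OF that] by (auto simp: restr_def)
  then have "(equiv X R \<and> (\<forall>A. A \<subseteq> X \<longrightarrow> f A = (\<Sum>Y\<in>X // R. restr f Y (A \<inter> Y))) \<and>
      (\<forall>Y\<in>X // R. indecomposable Y (restr f Y))) \<longleftrightarrow>
     (equiv X R \<and> (\<forall>A. A \<subseteq> X \<longrightarrow> g A = (\<Sum>Y\<in>X // R. restr g Y (A \<inter> Y))) \<and>
      (\<forall>Y\<in>X // R. indecomposable Y (restr g Y)))" for R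
    using assms by (cases "equiv X R") (auto cong: sum.cong)
  then show ?thesis unfolding ic_rel_def by simp
qed

lemma ic_cong: "(\<And>A. A \<subseteq> X \<Longrightarrow> f A = g A) \<Longrightarrow> ic X f = ic X g"
  unfolding ic_def by (metis ic_rel_cong)

lemma
  assumes "finite X" "f {} = 0" "X \<noteq> {}"
  shows ic_pos: "1 \<le> ic X f"
    and ic_eq_1_iff: "ic X f = 1 \<longleftrightarrow> inseparable X f"
proof -
  have eq: "equiv X (ic_rel X f)" and P: "component_partition X f (X // ic_rel X f)"
    using equiv_ic_rel[of X f, OF assms(1,2)] component_partition_ic_rel[of X f, OF assms(1,2)] .
  have "finite (X // ic_rel X f)" "X // ic_rel X f \<noteq> {}"
    using finite_quotient[OF assms(1) equiv_type[OF eq]] assms(3) by auto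
  then show "1 \<le> ic X f" by (simp add: ic_def Suc_le_eq card_gt_0_iff)
  show "ic X f = 1 \<longleftrightarrow> inseparable X f"
  proof
    assume "ic X f = 1"
    then obtain C where C: "X // ic_rel X f = {C}" by (auto simp: ic_def card_1_singleton_iff)
    then have "C = X" using Union_quotient[OF eq] by auto
    then show "inseparable X f" using P C by (simp add: component_partition_def)
  next
    assume "inseparable X f"
    then have "component_partition X f {X}"
      using assms by (simp add: component_partition_def partition_on_space separator_space)
    then show "ic X f = 1" using ic_eq_card[of X f, OF assms(1,2)] by simp
  qed
qed

lemma partition_on_UN:
  assumes P: "partition_on X P" and Q: "\<And>Y. Y \<in> P \<Longrightarrow> partition_on Y (Q Y)"
  shows "partition_on X (\<Union>Y\<in>P. Q Y)"
proof (rule partition_onI)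
  have "\<Union>(Q Y) = Y" if "Y \<in> P" for Y using Q[OF that] by (simp add: partition_on_def)
  then have "\<Union>(\<Union>Y\<in>P. Q Y) = \<Union>P" by blast
  then show "\<Union>(\<Union>Y\<in>P. Q Y) = X" using P by (simp add: partition_on_def)
  show "{} \<notin> (\<Union>Y\<in>P. Q Y)" using Q by (auto simp: partition_on_def)
  fix p q assume "p \<in> (\<Union>Y\<in>P. Q Y)" "q \<in> (\<Union>Y\<in>P. Q Y)" "p \<noteq> q"
  then obtain Y Z where YZ: "Y \<in> P" "p \<in> Q Y" "Z \<in> P" "q \<in> Q Z" by blast
  have "p \<subseteq> Y" "q \<subseteq> Z" using Q YZ by (auto simp: partition_on_def)
  show "disjnt p q"
  proof (cases "Y = Z")
    case True
    then show ?thesis using Q[OF \<open>Y \<in> P\<close>] YZ \<open>p \<noteq> q\<close> by (auto simp: partition_on_def pairwise_def)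
  next
    case False
    then have "disjnt Y Z" using P YZ by (auto simp: partition_on_def pairwise_def)
    then show ?thesis using \<open>p \<subseteq> Y\<close> \<open>q \<subseteq> Z\<close> by (rule disjnt_subset1[THEN disjnt_subset2])
  qed
qed

lemma ic_sum:
  assumes fin: "finite X" and f0: "f {} = 0" and P: "partition_on X P"
    and sep: "\<forall>Y\<in>P. separator X f Y"
  shows "ic X f = (\<Sum>Y\<in>P. ic Y f)"
proof -
  define Q where "Q Y = Y // ic_rel Y f" for Y
  have fY: "finite Y" if "Y \<in> P" for Y
    using that P fin by (auto simp: partition_on_def intro: finite_subset)
  have QY: "component_partition Y f (Q Y)" if "Y \<in> P" for Y
    unfolding Q_def using component_partition_ic_rel[of Y f, OF fY[OF that] f0] .
  then have pQ: "partition_on Y (Q Y)" if "Y \<in> P" for Y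
    using that by (simp add: component_partition_def)
  have "component_partition X f (\<Union>Y\<in>P. Q Y)"
    unfolding component_partition_def
  proof (intro conjI ballI)
    show "partition_on X (\<Union>Y\<in>P. Q Y)" using partition_on_UN[OF P pQ] .
    fix C assume "C \<in> (\<Union>Y\<in>P. Q Y)"
    then obtain Y where Y: "Y \<in> P" "C \<in> Q Y" by blast
    then show "separator X f C" "inseparable C f"
      using separator_trans[of X f Y C] sep QY[OF Y(1)] by (auto simp: component_partition_def)
  qed
  then have "ic X f = card (\<Union>Y\<in>P. Q Y)" using ic_eq_card[OF fin, of f] f0 by blast
  also have "\<dots> = (\<Sum>Y\<in>P. card (Q Y))"
  proof (rule card_UN_disjoint)
    show "finite P" using finite_elements[OF fin P] .
    show "\<forall>Y\<in>P. finite (Q Y)" using fY pQ finite_elements by blast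
    show "\<forall>Y\<in>P. \<forall>Z\<in>P. Y \<noteq> Z \<longrightarrow> Q Y \<inter> Q Z = {}"
    proof (intro ballI impI)
      fix Y Z assume "Y \<in> P" "Z \<in> P" "Y \<noteq> Z"
      then have "Y \<inter> Z = {}" using P by (auto simp: partition_on_def pairwise_def disjnt_def)
      moreover have "\<forall>C\<in>Q Y. C \<noteq> {} \<and> C \<subseteq> Y" "\<forall>C\<in>Q Z. C \<subseteq> Z"
        using pQ \<open>Y \<in> P\<close> \<open>Z \<in> P\<close> by (auto simp: partition_on_def)
      ultimately show "Q Y \<inter> Q Z = {}" by blast
    qed
  qed
  also have "\<dots> = (\<Sum>Y\<in>P. ic Y f)" by (simp add: Q_def ic_def)
  finally show ?thesis .
qed

lemma ic_split:
  assumes fin: "finite X" and f0: "f {} = 0" and S: "separator X f S"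
  shows "ic X f = ic S f + ic (X - S) f"
proof (cases "S = {} \<or> S = X")
  case True
  then show ?thesis by (auto simp: ic_def)
next
  case False
  then have "partition_on X {S, X - S}"
    using S by (auto simp: separator_def partition_on_def pairwise_def disjnt_def)
  moreover have "S \<noteq> X - S" using False by blast
  ultimately show ?thesis
    using ic_sum[of X f "{S, X - S}", OF fin f0] S separator_Diff[OF S] by simp
qed

lemma
  assumes "finite P" and S: "\<And>Y. Y \<in> P \<Longrightarrow> finite (S Y) \<and> S Y \<noteq> {}" and g0: "\<And>Y. g Y {} = 0"
  shows card_le_sum_ic: "card P \<le> (\<Sum>Y\<in>P. ic (S Y) (g Y))"
    and sum_ic_eq_card_iff: "(\<Sum>Y\<in>P. ic (S Y) (g Y)) = card P \<longleftrightarrow> (\<forall>Y\<in>P. inseparable (S Y) (g Y))"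
proof -
  have ge: "1 \<le> ic (S Y) (g Y)" if "Y \<in> P" for Y using ic_pos[of "S Y" "g Y"] S[OF that] g0 by blast
  then have "(\<Sum>Y\<in>P. 1) \<le> (\<Sum>Y\<in>P. ic (S Y) (g Y))" by (rule sum_mono)
  then show "card P \<le> (\<Sum>Y\<in>P. ic (S Y) (g Y))" by simp
  have "(\<Sum>Y\<in>P. ic (S Y) (g Y)) = card P \<longleftrightarrow> (\<forall>Y\<in>P. ic (S Y) (g Y) = 1)"
  proof
    assume eq: "(\<Sum>Y\<in>P. ic (S Y) (g Y)) = card P"
    show "\<forall>Y\<in>P. ic (S Y) (g Y) = 1"
    proof (rule ccontr)
      assume "\<not> (\<forall>Y\<in>P. ic (S Y) (g Y) = 1)"
      then have "(\<Sum>Y\<in>P. 1) < (\<Sum>Y\<in>P. ic (S Y) (g Y))"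
        using ge \<open>finite P\<close> by (intro sum_strict_mono_ex1) (auto, metis le_neq_implies_less)
      then show False using eq by simp
    qed
  qed simp
  also have "\<dots> \<longleftrightarrow> (\<forall>Y\<in>P. inseparable (S Y) (g Y))"
    using ic_eq_1_iff[of "S _" "g _"] S g0 by blast
  finally show "(\<Sum>Y\<in>P. ic (S Y) (g Y)) = card P \<longleftrightarrow> (\<forall>Y\<in>P. inseparable (S Y) (g Y))" .
qed

lemma ic_eq_card_if_singleton_separators:
  assumes fin: "finite X" and f0: "f {} = 0" and sep: "\<forall>x\<in>X. separator X f {x}"
  shows "ic X f = card X"
proof -
  have "component_partition X f ((\<lambda>x. {x}) ` X)"
    using sep partition_on_singletons inseparable_singleton by (auto simp: component_partition_def)
  then have "ic X f = card ((\<lambda>x. {x}) ` X)" using ic_eq_card[OF fin, of f] f0 by blast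
  also have "\<dots> = card X" by (rule card_image) (auto simp: inj_on_def)
  finally show ?thesis .
qed

lemma modular_iff_singleton_separators:
  assumes fin: "finite X" and f0: "f {} = 0"
  shows "modular X f \<longleftrightarrow> (\<forall>x\<in>X. separator X f {x})"
proof -
  have "(\<Sum>Y\<in>(\<lambda>x. {x}) ` X. f (A \<inter> Y)) = (\<Sum>x\<in>A. f {x})" if "A \<subseteq> X" for A
  proof -
    have "(\<Sum>Y\<in>(\<lambda>x. {x}) ` X. f (A \<inter> Y)) = (\<Sum>x\<in>X. f (A \<inter> {x}))"
      by (subst sum.reindex) (auto simp: inj_on_def)
    also have "\<dots> = (\<Sum>x\<in>A. f (A \<inter> {x}))"
      using that fin f0 by (intro sum.mono_neutral_right) auto
    also have "\<dots> = (\<Sum>x\<in>A. f {x})" by (intro sum.cong) auto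
    finally show ?thesis .
  qed
  then show ?thesis
    using separators_iff_sum[of X "(\<lambda>x. {x}) ` X" f, OF fin partition_on_singletons f0]
    by (simp add: modular_def)
qed

section \<open>Conditioning and quotients\<close>

lemma condf_eq_on_class:
  assumes fin: "finite X" and f0: "f {} = 0" and R: "equiv X R" and Y: "Y \<in> X // R"
    and A: "A \<subseteq> Y"
  shows "condf X R f A = f A"
proof -
  have "f (A \<inter> Z) = 0" if "Z \<in> X // R - {Y}" for Z
  proof -
    have "A \<inter> Z = {}" using quotient_disj[OF R Y, of Z] that A by auto
    then show ?thesis using f0 by simp
  qed
  moreover have "finite (X // R)" using finite_quotient[OF fin equiv_type[OF R]] .
  moreover have "A \<subseteq> X" "A \<inter> Y = A" using A in_quotient_imp_subset[OF R Y] by auto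
  ultimately show ?thesis using sum.remove[OF _ Y, of "\<lambda>Z. f (A \<inter> Z)"] by (simp add: condf_def)
qed

lemma condf_empty: "f {} = 0 \<Longrightarrow> condf X R f {} = 0"
  by (simp add: condf_def)

lemma separator_condf:
  assumes fin: "finite X" and f0: "f {} = 0" and R: "equiv X R" and Y: "Y \<in> X // R"
  shows "separator X (condf X R f) Y"
proof -
  have "condf X R f A = (\<Sum>Z\<in>X // R. condf X R f (A \<inter> Z))" if "A \<subseteq> X" for A
    using that condf_eq_on_class[OF fin, of f, OF f0 R] by (simp add: condf_def)
  then show ?thesis
    using separators_iff_sum[of X "X // R" "condf X R f", OF fin partition_on_quotient[OF R]
        condf_empty[of f, OF f0]] Y by blast
qed

lemma ic_condf:
  assumes fin: "finite X" and f0: "f {} = 0" and R: "equiv X R"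
  shows "ic X (condf X R f) = (\<Sum>Y\<in>X // R. ic Y f)"
proof -
  have "ic X (condf X R f) = (\<Sum>Y\<in>X // R. ic Y (condf X R f))"
    using ic_sum[of X "condf X R f", OF fin condf_empty[of f, OF f0] partition_on_quotient[OF R]]
      separator_condf[OF fin, of f, OF f0 R] by blast
  also have "\<dots> = (\<Sum>Y\<in>X // R. ic Y f)"
    by (intro sum.cong refl ic_cong condf_eq_on_class[OF fin, of f, OF f0 R]) auto
  finally show ?thesis .
qed

lemma EW_iff:
  assumes fin: "finite X" and f0: "f {} = 0"
  shows "R \<in> EW X f \<longleftrightarrow> equiv X R \<and> (\<forall>Y\<in>X // R. inseparable Y f)"
proof (cases "equiv X R")
  case True
  have "finite (X // R)" using finite_quotient[OF fin equiv_type[OF True]] .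
  moreover have "finite Y \<and> Y \<noteq> {}" if "Y \<in> X // R" for Y
    using fin finite_subset[OF in_quotient_imp_subset[OF True that]]
      in_quotient_imp_non_empty[OF True that] by blast
  ultimately have "(\<Sum>Y\<in>X // R. ic Y f) = card (X // R) \<longleftrightarrow> (\<forall>Y\<in>X // R. inseparable Y f)"
    using sum_ic_eq_card_iff[of "X // R" "\<lambda>Y. Y" "\<lambda>_. f"] f0 by blast
  then show ?thesis using True by (simp add: EW_def cl_def ic_condf[OF fin, of f, OF f0])
qed (simp add: EW_def)

lemma ES_iff:
  assumes "finite X" "f {} = 0"
  shows "R \<in> ES X f \<longleftrightarrow>
    equiv X R \<and> (\<forall>Y\<in>X // R. inseparable Y f) \<and> ic (X // R) (quotf X R f) = ic X f"
  using EW_iff[of X f, OF assms] by (auto simp: ES_def)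

lemma quotf_eq:
  assumes R: "equiv X R" and B: "B \<subseteq> X // R"
  shows "quotf X R f B = f (\<Union>B)"
proof -
  have "{x \<in> X. proj R x \<in> B} = \<Union>B"
  proof safe
    fix x assume "x \<in> X" "proj R x \<in> B"
    then show "x \<in> \<Union>B" using equiv_class_self[OF R] by (auto simp: proj_def)
  next
    fix x Y assume x: "x \<in> Y" "Y \<in> B"
    then have Y: "Y \<in> X // R" using B by blast
    then show "x \<in> X" using x in_quotient_imp_subset[OF R] by blast
    then have "R `` {x} = Y" using quotient_eqI[OF R quotientI Y, of x x x] x equiv_class_self[OF R]
      by blast
    then show "proj R x \<in> B" using x by (simp add: proj_def)
  qed
  then show ?thesis using B by (simp add: quotf_def)
qed

lemma quotf_empty: "f {} = 0 \<Longrightarrow> quotf X R f {} = 0"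
  by (simp add: quotf_def)

lemma separator_via_Union:
  assumes U: "pairwise disjnt U" and S: "S \<subseteq> U" and g: "\<And>B. B \<subseteq> U \<Longrightarrow> g B = f (\<Union>B)"
    and sep: "separator (\<Union>U) f (\<Union>S)"
  shows "separator U g S"
  unfolding separator_def
proof (intro conjI allI impI)
  fix B assume B: "B \<subseteq> U"
  have disj: "pairwise disjnt (B \<union> S)" using pairwise_subset[OF U] B S by blast
  have Int: "\<Union>B \<inter> \<Union>S = \<Union>(B \<inter> S)" using Int_Union_pairwise_disjoint[OF disj] .
  have "\<Union>B - \<Union>S = \<Union>B - \<Union>(B \<inter> S)" using Int by blast
  also have "\<dots> = \<Union>(B - S)"
    using diff_Union_pairwise_disjoint[of B "B \<inter> S"] disj by (simp add: Diff_Int pairwise_mono)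
  finally have Diff: "\<Union>B - \<Union>S = \<Union>(B - S)" .
  have "f (\<Union>B) = f (\<Union>B \<inter> \<Union>S) + f (\<Union>B - \<Union>S)"
    using sep B unfolding separator_def by blast
  moreover have "B \<inter> S \<subseteq> U" "B - S \<subseteq> U" using B by auto
  ultimately show "g B = g (B \<inter> S) + g (B - S)" using g B Int Diff by simp
qed (rule S)

lemma separator_quotf:
  assumes R: "equiv X R" and U: "U \<subseteq> X // R" and S: "S \<subseteq> U"
    and sep: "separator (\<Union>U) f (\<Union>S)"
  shows "separator U (quotf X R f) S"
proof (rule separator_via_Union[OF _ S _ sep])
  show "pairwise disjnt U"
    using partition_on_quotient[OF R] U by (auto simp: partition_on_def intro: pairwise_subset)
  show "\<And>B. B \<subseteq> U \<Longrightarrow> quotf X R f B = f (\<Union>B)" using quotf_eq[OF R] U by blast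
qed

lemma separator_image_iff:
  assumes inj: "inj_on \<phi> X" and g: "\<And>A. A \<subseteq> X \<Longrightarrow> g (\<phi> ` A) = f A"
    and "S \<subseteq> Y" "Y \<subseteq> X"
  shows "separator (\<phi> ` Y) g (\<phi> ` S) \<longleftrightarrow> separator Y f S"
proof -
  have "g (\<phi> ` A) = g (\<phi> ` A \<inter> \<phi> ` S) + g (\<phi> ` A - \<phi> ` S) \<longleftrightarrow> f A = f (A \<inter> S) + f (A - S)"
    if "A \<subseteq> Y" for A
  proof -
    have sub: "A \<subseteq> X" "S \<subseteq> X" "A \<inter> S \<subseteq> X" "A - S \<subseteq> X" using that assms(3,4) by auto
    then have "\<phi> ` A \<inter> \<phi> ` S = \<phi> ` (A \<inter> S)" "\<phi> ` A - \<phi> ` S = \<phi> ` (A - S)"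
      using inj_on_image_Int[OF inj, of A S] inj_on_image_set_diff[OF inj, of A S] by simp_all
    moreover note sub
    ultimately show ?thesis using g by simp
  qed
  moreover have "(\<forall>A'. A' \<subseteq> \<phi> ` Y \<longrightarrow> P A') \<longleftrightarrow> (\<forall>A. A \<subseteq> Y \<longrightarrow> P (\<phi> ` A))" for P
    by (auto simp: subset_image_iff)
  ultimately show ?thesis unfolding separator_def using assms(3) by auto
qed

lemma inseparable_image_iff:
  assumes inj: "inj_on \<phi> X" and g: "\<And>A. A \<subseteq> X \<Longrightarrow> g (\<phi> ` A) = f A" and Y: "Y \<subseteq> X"
  shows "inseparable (\<phi> ` Y) g \<longleftrightarrow> inseparable Y f"
proof -
  have injY: "inj_on \<phi> Y" using inj Y by (rule inj_on_subset)
  have "(\<forall>T'. separator (\<phi> ` Y) g T' \<longrightarrow> T' = {} \<or> T' = \<phi> ` Y) \<longleftrightarrow>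
      (\<forall>T. T \<subseteq> Y \<longrightarrow> separator (\<phi> ` Y) g (\<phi> ` T) \<longrightarrow> \<phi> ` T = {} \<or> \<phi> ` T = \<phi> ` Y)"
    by (auto simp: separator_def subset_image_iff)
  also have "\<dots> \<longleftrightarrow> (\<forall>T. T \<subseteq> Y \<longrightarrow> separator Y f T \<longrightarrow> T = {} \<or> T = Y)"
    using separator_image_iff[of \<phi> X g f, OF inj g _ Y] inj_on_image_eq_iff[OF injY] by auto
  also have "\<dots> \<longleftrightarrow> (\<forall>T. separator Y f T \<longrightarrow> T = {} \<or> T = Y)"
    by (auto simp: separator_def)
  finally show ?thesis unfolding inseparable_def by simp
qed

lemma ic_image:
  assumes inj: "inj_on \<phi> X" and g: "\<And>A. A \<subseteq> X \<Longrightarrow> g (\<phi> ` A) = f A"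
    and fin: "finite X" and f0: "f {} = 0"
  shows "ic (\<phi> ` X) g = ic X f"
proof -
  have g0: "g {} = 0" using g[of "{}"] f0 by simp
  obtain P where P: "component_partition X f P" using component_partition_ic_rel[OF fin, of f] f0 by blast
  then have pP: "partition_on X P" by (simp add: component_partition_def)
  then have PX: "P \<subseteq> Pow X" by (auto simp: partition_on_def)
  have "(`) \<phi> ` P - {{}} = (`) \<phi> ` P" using pP by (auto simp: partition_on_def)
  then have "partition_on (\<phi> ` X) ((`) \<phi> ` P)" using partition_on_inj_image[OF pP inj] by simp
  moreover have "separator (\<phi> ` X) g (\<phi> ` Y) \<and> inseparable (\<phi> ` Y) g" if "Y \<in> P" for Y
    using that P PX separator_image_iff[of \<phi> X g f, OF inj g, of Y X]
      inseparable_image_iff[of \<phi> X g f, OF inj g, of Y]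
    by (auto simp: component_partition_def)
  ultimately have "component_partition (\<phi> ` X) g ((`) \<phi> ` P)" by (auto simp: component_partition_def)
  then have "ic (\<phi> ` X) g = card ((`) \<phi> ` P)" using ic_eq_card[of "\<phi> ` X" g] fin g0 by blast
  also have "\<dots> = card P" using card_image[OF inj_on_subset[OF inj_on_image_Pow[OF inj] PX]] .
  also have "\<dots> = ic X f" using ic_eq_card[OF fin, of f] f0 P by simp
  finally show ?thesis .
qed

section \<open>Refinements\<close>

definition classes_in :: "'a set \<Rightarrow> ('a \<times> 'a) set \<Rightarrow> 'a set \<Rightarrow> 'a set set" where
  "classes_in X R C = {Y \<in> X // R. Y \<subseteq> C}"

context
  fixes X C :: "'a set" and R :: "('a \<times> 'a) set"
  assumes R: "equiv X R" and C: "C \<subseteq> X"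
    and saturated: "\<And>Y. Y \<in> X // R \<Longrightarrow> Y \<subseteq> C \<or> Y \<inter> C = {}"
begin

lemma Union_classes_in: "\<Union>(classes_in X R C) = C"
proof
  show "C \<subseteq> \<Union>(classes_in X R C)"
  proof
    fix c assume "c \<in> C"
    then have "c \<in> X" using C by blast
    then have "R `` {c} \<in> X // R" "c \<in> R `` {c}" using quotientI equiv_class_self[OF R] by auto
    then show "c \<in> \<Union>(classes_in X R C)"
      using saturated[of "R `` {c}"] \<open>c \<in> C\<close> by (auto simp: classes_in_def)
  qed
qed (auto simp: classes_in_def)

lemma equiv_restrict: "equiv C (R \<inter> C \<times> C)"
  and quotient_restrict: "C // (R \<inter> C \<times> C) = classes_in X R C"
proof -
  have P: "partition_on C (classes_in X R C)"
  proof (rule partition_onI)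
    show "\<Union>(classes_in X R C) = C" by (rule Union_classes_in)
    show "{} \<notin> classes_in X R C" using in_quotient_imp_non_empty[OF R] by (auto simp: classes_in_def)
    show "disjnt p q" if "p \<in> classes_in X R C" "q \<in> classes_in X R C" "p \<noteq> q" for p q
      using quotient_disj[OF R] that by (auto simp: classes_in_def disjnt_def)
  qed
  have "part_rel (classes_in X R C) = R \<inter> C \<times> C"
  proof -
    have "(x, y) \<in> part_rel (classes_in X R C) \<longleftrightarrow> (x, y) \<in> R \<and> x \<in> C \<and> y \<in> C" for x y
    proof
      assume "(x, y) \<in> part_rel (classes_in X R C)"
      then obtain Y where "Y \<in> X // R" "Y \<subseteq> C" "x \<in> Y" "y \<in> Y"
        by (auto simp: part_rel_def classes_in_def)
      then show "(x, y) \<in> R \<and> x \<in> C \<and> y \<in> C" using in_quotient_imp_in_rel[OF R] by blast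
    next
      assume xy: "(x, y) \<in> R \<and> x \<in> C \<and> y \<in> C"
      then have "x \<in> X" using C by blast
      then have "R `` {x} \<in> X // R" "x \<in> R `` {x}" "y \<in> R `` {x}"
        using xy quotientI equiv_class_self[OF R] by auto
      then show "(x, y) \<in> part_rel (classes_in X R C)"
        using saturated[of "R `` {x}"] xy by (auto simp: part_rel_def classes_in_def)
    qed
    then show ?thesis by auto
  qed
  then show "equiv C (R \<inter> C \<times> C)" "C // (R \<inter> C \<times> C) = classes_in X R C"
    using equiv_part_rel[OF P] quotient_part_rel[OF P] by simp_all
qed

end

context
  fixes X :: "'a set" and R R' :: "('a \<times> 'a) set"
  assumes R: "equiv X R" and R': "equiv X R'" and finer: "R \<subseteq> R'"
begin

lemma class_subset_or_disjoint:
  assumes Y: "Y \<in> X // R" and W: "W \<in> X // R'"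
  shows "Y \<subseteq> W \<or> Y \<inter> W = {}"
proof (rule disjCI)
  assume "Y \<inter> W \<noteq> {}"
  then obtain z where z: "z \<in> Y" "z \<in> W" by blast
  show "Y \<subseteq> W"
  proof
    fix t assume "t \<in> Y"
    then have "(z, t) \<in> R'" using in_quotient_imp_in_rel[OF R Y, of z t] z finer by blast
    then show "t \<in> W" using in_quotient_imp_closed[OF R' W z(2)] by blast
  qed
qed

lemma class_subset_coarser_class:
  assumes "Y \<in> X // R" obtains W where "W \<in> X // R'" "Y \<subseteq> W"
proof -
  obtain y where "y \<in> X" "Y = R `` {y}" using assms by (rule quotientE)
  then show ?thesis using that[of "R' `` {y}"] finer by (auto intro: quotientI)
qed

lemma Union_classes_in_coarser: "W \<in> X // R' \<Longrightarrow> \<Union>(classes_in X R W) = W"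
  using Union_classes_in[OF R in_quotient_imp_subset[OF R']] class_subset_or_disjoint by blast

lemma inj_on_classes_in: "inj_on (classes_in X R) (X // R')"
  using Union_classes_in_coarser by (metis inj_onI)

lemma partition_classes_in: "partition_on (X // R) (classes_in X R ` (X // R'))"
proof (rule partition_onI)
  show "\<Union>(classes_in X R ` (X // R')) = X // R"
  proof
    show "X // R \<subseteq> \<Union>(classes_in X R ` (X // R'))"
    proof
      fix Y assume Y: "Y \<in> X // R"
      then obtain W where "W \<in> X // R'" "Y \<subseteq> W" by (rule class_subset_coarser_class)
      then show "Y \<in> \<Union>(classes_in X R ` (X // R'))" using Y by (auto simp: classes_in_def)
    qed
  qed (auto simp: classes_in_def)
  show "{} \<notin> classes_in X R ` (X // R')"
    using Union_classes_in_coarser in_quotient_imp_non_empty[OF R'] by force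
  fix p q assume "p \<in> classes_in X R ` (X // R')" "q \<in> classes_in X R ` (X // R')" "p \<noteq> q"
  then obtain W1 W2 where W: "W1 \<in> X // R'" "W2 \<in> X // R'" "W1 \<noteq> W2"
    and pq: "p = classes_in X R W1" "q = classes_in X R W2" by blast
  have "W1 \<inter> W2 = {}" using quotient_disj[OF R' W(1,2)] W(3) by simp
  then show "disjnt p q"
    using pq in_quotient_imp_non_empty[OF R] by (fastforce simp: classes_in_def disjnt_def)
qed

lemma bar_rel_eq_part_rel: "bar_rel X R R' = part_rel (classes_in X R ` (X // R'))"
proof safe
  fix Y1 Y2 assume "(Y1, Y2) \<in> bar_rel X R R'"
  then obtain x y where xy: "x \<in> X" "y \<in> X" "(x, y) \<in> R'" "Y1 = R `` {x}" "Y2 = R `` {y}"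
    by (auto simp: bar_rel_def proj_def)
  have "R `` {x} \<subseteq> R' `` {x}" "R `` {y} \<subseteq> R' `` {y}" using finer by auto
  moreover have "R' `` {y} = R' `` {x}" using equiv_class_eq[OF R' xy(3)] by simp
  ultimately have "Y1 \<in> classes_in X R (R' `` {x})" "Y2 \<in> classes_in X R (R' `` {x})"
    using xy by (auto simp: classes_in_def intro: quotientI)
  moreover have "R' `` {x} \<in> X // R'" using xy(1) by (rule quotientI)
  ultimately show "(Y1, Y2) \<in> part_rel (classes_in X R ` (X // R'))" by (auto simp: part_rel_def)
next
  fix Y1 Y2 assume "(Y1, Y2) \<in> part_rel (classes_in X R ` (X // R'))"
  then obtain W where W: "W \<in> X // R'" "Y1 \<in> classes_in X R W" "Y2 \<in> classes_in X R W"
    by (auto simp: part_rel_def)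
  obtain x where x: "x \<in> X" "Y1 = R `` {x}" using W(2) by (auto simp: classes_in_def elim: quotientE)
  obtain y where y: "y \<in> X" "Y2 = R `` {y}" using W(3) by (auto simp: classes_in_def elim: quotientE)
  have "x \<in> W" "y \<in> W" using x y W equiv_class_self[OF R] by (auto simp: classes_in_def)
  then have "(x, y) \<in> R'" using in_quotient_imp_in_rel[OF R' W(1)] by blast
  then show "(Y1, Y2) \<in> bar_rel X R R'" using x y by (auto simp: bar_rel_def proj_def)
qed

lemma equiv_bar_rel: "equiv (X // R) (bar_rel X R R')"
  and quotient_bar_rel: "(X // R) // bar_rel X R R' = classes_in X R ` (X // R')"
  using equiv_part_rel[OF partition_classes_in] quotient_part_rel[OF partition_classes_in]
  by (simp_all add: bar_rel_eq_part_rel)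

lemma refinement_eq_if_card_quotient_le:
  assumes "finite X" "card (X // R) \<le> card (X // R')"
  shows "R = R'"
proof
  show "R' \<subseteq> R"
  proof
    fix p assume "p \<in> R'"
    then obtain x y where p: "p = (x, y)" "(x, y) \<in> R'" by (cases p) auto
    then have xy: "x \<in> X" "y \<in> X" using equiv_type[OF R'] by auto
    have fin: "finite (X // R)" using finite_quotient[OF assms(1) equiv_type[OF R]] .
    have im: "(\<lambda>Z. R' `` Z) ` (X // R) = X // R'" by (rule refines_equiv_image_eq[OF finer R R'])
    then have "card ((\<lambda>Z. R' `` Z) ` (X // R)) = card (X // R)"
      using card_image_le[OF fin, of "\<lambda>Z. R' `` Z"] assms(2) by simp
    then have "inj_on (\<lambda>Z. R' `` Z) (X // R)" using eq_card_imp_inj_on[OF fin] by blast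
    moreover have "R' `` (R `` {x}) = R' `` (R `` {y})"
      using refines_equiv_class_eq2[OF finer R R'] equiv_class_eq[OF R' p(2)] by simp
    ultimately have "R `` {x} = R `` {y}" using xy by (auto intro: quotientI dest: inj_onD)
    then show "p \<in> R" using p(1) eq_equiv_class_iff[OF R xy] by simp
  qed
qed (rule finer)

context
  fixes f :: "'a set \<Rightarrow> int"
  assumes fin: "finite X" and f0: "f {} = 0"
begin

lemma ic_quotf_bar_rel:
  "ic ((X // R) // bar_rel X R R') (quotf (X // R) (bar_rel X R R') (quotf X R f)) =
    ic (X // R') (quotf X R' f)"
proof -
  let ?g = "quotf (X // R) (bar_rel X R R') (quotf X R f)"
  have "?g (classes_in X R ` A) = quotf X R' f A" if A: "A \<subseteq> X // R'" for A
  proof -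
    have "\<Union>(\<Union>(classes_in X R ` A)) = (\<Union>W\<in>A. \<Union>(classes_in X R W))" by blast
    also have "\<dots> = (\<Union>W\<in>A. W)" using Union_classes_in_coarser A by (intro SUP_cong) auto
    finally have "\<Union>(\<Union>(classes_in X R ` A)) = \<Union>A" by simp
    moreover have "classes_in X R ` A \<subseteq> (X // R) // bar_rel X R R'"
      using A quotient_bar_rel by auto
    moreover have "\<Union>(classes_in X R ` A) \<subseteq> X // R" by (auto simp: classes_in_def)
    ultimately show ?thesis using quotf_eq[OF equiv_bar_rel] quotf_eq[OF R] quotf_eq[OF R' A] by simp
  qed
  then have "ic (classes_in X R ` (X // R')) ?g = ic (X // R') (quotf X R' f)"
    using ic_image[OF inj_on_classes_in, of ?g "quotf X R' f"]
      finite_quotient[OF fin equiv_type[OF R']] quotf_empty[of f, OF f0] by blast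
  then show ?thesis using quotient_bar_rel by simp
qed

lemma inseparable_condf_iff: "Y \<in> X // R \<Longrightarrow> inseparable Y (condf X R' f) \<longleftrightarrow> inseparable Y f"
  by (rule class_subset_coarser_class, assumption, rule inseparable_cong)
    (auto intro: condf_eq_on_class[OF fin, of f, OF f0 R'])

lemma ic_quotf_condf:
  "ic (X // R) (quotf X R (condf X R' f)) = (\<Sum>W\<in>X // R'. ic (classes_in X R W) (quotf X R f))"
proof -
  let ?c = "condf X R' f"
  have "separator (X // R) (quotf X R ?c) Z" if Z: "Z \<in> classes_in X R ` (X // R')" for Z
  proof -
    obtain W where W: "W \<in> X // R'" "Z = classes_in X R W" using Z by blast
    then have "separator (\<Union>(X // R)) ?c (\<Union>Z)"
      using Union_classes_in_coarser separator_condf[OF fin, of f, OF f0 R'] Union_quotient[OF R]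
      by simp
    then show ?thesis using separator_quotf[OF R subset_refl] W(2) by (auto simp: classes_in_def)
  qed
  then have "ic (X // R) (quotf X R ?c) = (\<Sum>Z\<in>classes_in X R ` (X // R'). ic Z (quotf X R ?c))"
    using ic_sum[of "X // R" "quotf X R ?c", OF finite_quotient[OF fin equiv_type[OF R]]
        quotf_empty[of ?c X R, OF condf_empty[of f X R', OF f0]] partition_classes_in] by blast
  also have "\<dots> = (\<Sum>W\<in>X // R'. ic (classes_in X R W) (quotf X R ?c))"
    using sum.reindex[OF inj_on_classes_in] by simp
  also have "\<dots> = (\<Sum>W\<in>X // R'. ic (classes_in X R W) (quotf X R f))"
  proof (intro sum.cong refl ic_cong)
    fix W B assume W: "W \<in> X // R'" and B: "B \<subseteq> classes_in X R W"
    then have "B \<subseteq> X // R" "\<Union>B \<subseteq> W" by (auto simp: classes_in_def)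
    then show "quotf X R ?c B = quotf X R f B"
      using quotf_eq[OF R] condf_eq_on_class[OF fin, of f, OF f0 R' W] by simp
  qed
  finally show ?thesis .
qed

lemma
  shows card_le_sum_ic_classes_in:
    "card (X // R') \<le> (\<Sum>W\<in>X // R'. ic (classes_in X R W) (quotf X R f))"
  and sum_ic_classes_in_eq_card_iff:
    "(\<Sum>W\<in>X // R'. ic (classes_in X R W) (quotf X R f)) = card (X // R') \<longleftrightarrow>
      (\<forall>W\<in>X // R'. inseparable (classes_in X R W) (quotf X R f))"
proof -
  have "finite (X // R')" using finite_quotient[OF fin equiv_type[OF R']] .
  moreover have "finite (classes_in X R W)" for W
    using finite_quotient[OF fin equiv_type[OF R]] by (auto simp: classes_in_def)
  moreover have "classes_in X R W \<noteq> {}" if "W \<in> X // R'" for W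
    using Union_classes_in_coarser[OF that] in_quotient_imp_non_empty[OF R' that] by auto
  ultimately show "card (X // R') \<le> (\<Sum>W\<in>X // R'. ic (classes_in X R W) (quotf X R f))"
    and "(\<Sum>W\<in>X // R'. ic (classes_in X R W) (quotf X R f)) = card (X // R') \<longleftrightarrow>
      (\<forall>W\<in>X // R'. inseparable (classes_in X R W) (quotf X R f))"
    using card_le_sum_ic[of "X // R'" "classes_in X R" "\<lambda>_. quotf X R f"]
      sum_ic_eq_card_iff[of "X // R'" "classes_in X R" "\<lambda>_. quotf X R f"] quotf_empty[of f, OF f0]
    by blast+
qed

lemma inseparable_coarser_class:
  assumes ins: "\<forall>Y\<in>X // R. inseparable Y f" and ins': "inseparable (classes_in X R W) (quotf X R f)"
    and W: "W \<in> X // R'"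
  shows "inseparable W f"
  unfolding inseparable_def
proof (intro conjI allI impI)
  show "W \<noteq> {}" using in_quotient_imp_non_empty[OF R' W] .
  fix T assume T: "separator W f T"
  define TT where "TT = {Y \<in> classes_in X R W. Y \<subseteq> T}"
  have "\<Union>TT = T"
  proof
    show "T \<subseteq> \<Union>TT"
    proof
      fix t assume "t \<in> T"
      then have "t \<in> \<Union>(classes_in X R W)"
        using T Union_classes_in_coarser[OF W] by (auto simp: separator_def)
      then obtain Y where Y: "Y \<in> classes_in X R W" "t \<in> Y" by blast
      then have "Y \<subseteq> T \<or> Y \<inter> T = {}"
        using inseparable_subset_or_disjoint[OF T, of Y] ins by (auto simp: classes_in_def)
      then show "t \<in> \<Union>TT" using Y \<open>t \<in> T\<close> by (auto simp: TT_def)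
    qed
  qed (auto simp: TT_def)
  then have "separator (\<Union>(classes_in X R W)) f (\<Union>TT)" using Union_classes_in_coarser[OF W] T by simp
  then have "separator (classes_in X R W) (quotf X R f) TT"
    using separator_quotf[OF R, of "classes_in X R W" TT f] by (auto simp: TT_def classes_in_def)
  then have "TT = {} \<or> TT = classes_in X R W" using ins' by (auto simp: inseparable_def)
  then show "T = {} \<or> T = W" using \<open>\<Union>TT = T\<close> Union_classes_in_coarser[OF W] by auto
qed

end

end

section \<open>Strong equivalences\<close>

lemma EW_subset_ic_rel:
  assumes fin: "finite X" and f0: "f {} = 0" and EW: "R \<in> EW X f"
  shows "R \<subseteq> ic_rel X f"
proof
  fix p assume "p \<in> R"
  then obtain x y where p: "p = (x, y)" "(x, y) \<in> R" by (cases p) auto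
  have R: "equiv X R" and ins: "\<forall>Y\<in>X // R. inseparable Y f" using EW EW_iff[OF fin, of f] f0 by auto
  have K: "equiv X (ic_rel X f)" and P: "component_partition X f (X // ic_rel X f)"
    using equiv_ic_rel[OF fin, of f] component_partition_ic_rel[OF fin, of f] f0 by auto
  have "x \<in> X" using p equiv_type[OF R] by blast
  then have classes: "R `` {x} \<in> X // R" "ic_rel X f `` {x} \<in> X // ic_rel X f"
    and "x \<in> R `` {x}" "x \<in> ic_rel X f `` {x}"
    using quotientI equiv_class_self[OF R] equiv_class_self[OF K] by auto
  moreover have "separator X f (ic_rel X f `` {x})"
    using P classes(2) by (simp add: component_partition_def)
  ultimately have "R `` {x} \<subseteq> ic_rel X f `` {x}"
    using inseparable_subset_or_disjoint[of X f "ic_rel X f `` {x}" "R `` {x}"] ins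
      in_quotient_imp_subset[OF R] by blast
  then show "p \<in> ic_rel X f" using p by auto
qed

lemma condf_ic_rel:
  assumes fin: "finite X" and f0: "f {} = 0" and A: "A \<subseteq> X"
  shows "condf X (ic_rel X f) f A = f A"
proof -
  have "partition_on X (X // ic_rel X f)" "\<forall>Y\<in>X // ic_rel X f. separator X f Y"
    using component_partition_ic_rel[OF fin, of f] f0 by (simp_all add: component_partition_def)
  then have "f A = (\<Sum>Y\<in>X // ic_rel X f. f (A \<inter> Y))"
    using separators_iff_sum[OF fin, of "X // ic_rel X f" f] f0 A by blast
  then show ?thesis using A by (simp add: condf_def)
qed

text \<open>R refines the components, and conditioning f on its own components does not change f.\<close>

lemma ic_le_ic_quotf:
  assumes fin: "finite X" and f0: "f {} = 0" and EW: "R \<in> EW X f"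
  shows "ic X f \<le> ic (X // R) (quotf X R f)"
proof -
  let ?K = "ic_rel X f"
  have R: "equiv X R" using EW EW_iff[OF fin, of f] f0 by auto
  have K: "equiv X ?K" using equiv_ic_rel[OF fin, of f] f0 by auto
  have "ic X f = card (X // ?K)" by (simp add: ic_def)
  also have "\<dots> \<le> (\<Sum>W\<in>X // ?K. ic (classes_in X R W) (quotf X R f))"
    using card_le_sum_ic_classes_in[OF R K EW_subset_ic_rel[OF fin, of f, OF f0 EW] fin, of f, OF f0] .
  also have "\<dots> = ic (X // R) (quotf X R (condf X ?K f))"
    using ic_quotf_condf[OF R K EW_subset_ic_rel[OF fin, of f, OF f0 EW] fin, of f, OF f0] by simp
  also have "\<dots> = ic (X // R) (quotf X R f)"
  proof (rule ic_cong)
    fix B assume "B \<subseteq> X // R"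
    moreover have "\<Union>B \<subseteq> X" using calculation in_quotient_imp_subset[OF R] by blast
    ultimately show "quotf X R (condf X ?K f) B = quotf X R f B"
      using quotf_eq[OF R] condf_ic_rel[OF fin, of f] f0 by simp
  qed
  finally show ?thesis .
qed

text \<open>
  Both sides say that the classes of R are inseparable, that every R'-class is inseparable in the
  quotient by R, and that ic f = ic (f/R) = ic (f/R'); the chain
  ic f \<le> ic (f/R) \<le> ic (f/R') lets either equality be traded for the other.
\<close>

theorem ES_refinement_iff:
  assumes fin: "finite X" and f0: "f {} = 0"
    and R: "equiv X R" and R': "equiv X R'" and finer: "R \<subseteq> R'"
  shows "(R \<in> ES X f \<and> bar_rel X R R' \<in> ES (X // R) (quotf X R f)) \<longleftrightarrow>
    (R' \<in> ES X f \<and> R \<in> ES X (condf X R' f))"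
proof -
  let ?g = "quotf X R f"
  let ?sum_classes = "\<Sum>W\<in>X // R'. ic (classes_in X R W) ?g"
  have finR: "finite (X // R)" using finite_quotient[OF fin equiv_type[OF R]] .
  have g0: "?g {} = 0" using quotf_empty[of f, OF f0] .
  have ES_R: "R \<in> ES X f \<longleftrightarrow> (\<forall>Y\<in>X // R. inseparable Y f) \<and> ic (X // R) ?g = ic X f"
    using ES_iff[OF fin, of f] f0 R by simp
  have ES_bar: "bar_rel X R R' \<in> ES (X // R) ?g \<longleftrightarrow>
      (\<forall>W\<in>X // R'. inseparable (classes_in X R W) ?g) \<and> ic (X // R') (quotf X R' f) = ic (X // R) ?g"
    using ES_iff[of "X // R" ?g, OF finR g0] equiv_bar_rel[OF R R' finer] quotient_bar_rel[OF R R' finer]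
      ic_quotf_bar_rel[OF R R' finer fin, of f] f0 by simp
  have ES_R': "R' \<in> ES X f \<longleftrightarrow>
      (\<forall>W\<in>X // R'. inseparable W f) \<and> ic (X // R') (quotf X R' f) = ic X f"
    using ES_iff[OF fin, of f] f0 R' by simp
  have ES_cond: "R \<in> ES X (condf X R' f) \<longleftrightarrow>
      (\<forall>Y\<in>X // R. inseparable Y f) \<and> ?sum_classes = (\<Sum>W\<in>X // R'. ic W f)"
    using ES_iff[OF fin, of "condf X R' f"] condf_empty[of f, OF f0] R
      inseparable_condf_iff[OF R R' finer fin, of f] ic_quotf_condf[OF R R' finer fin, of f]
      ic_condf[OF fin, of f, OF f0 R'] f0 by auto
  have sum_W: "(\<Sum>W\<in>X // R'. ic W f) = card (X // R')" if "\<forall>W\<in>X // R'. inseparable W f"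
  proof -
    have "ic W f = 1" if "W \<in> X // R'" for W
      using ic_eq_1_iff[of W f] that \<open>\<forall>W\<in>X // R'. inseparable W f\<close> f0
        finite_subset[OF in_quotient_imp_subset[OF R'] fin] in_quotient_imp_non_empty[OF R']
      by blast
    then show ?thesis by simp
  qed
  note sum_classes_iff = sum_ic_classes_in_eq_card_iff[OF R R' finer fin, of f, OF f0]
  show ?thesis
  proof
    assume "R \<in> ES X f \<and> bar_rel X R R' \<in> ES (X // R) ?g"
    then have ins: "\<forall>Y\<in>X // R. inseparable Y f" and "ic (X // R) ?g = ic X f"
      and ins_classes: "\<forall>W\<in>X // R'. inseparable (classes_in X R W) ?g"
      and "ic (X // R') (quotf X R' f) = ic (X // R) ?g"
      using ES_R ES_bar by auto
    moreover have ins': "\<forall>W\<in>X // R'. inseparable W f"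
      using inseparable_coarser_class[OF R R' finer fin, of f] f0 ins ins_classes by blast
    moreover have "?sum_classes = card (X // R')" using sum_classes_iff ins_classes by blast
    ultimately show "R' \<in> ES X f \<and> R \<in> ES X (condf X R' f)"
      using ES_R' ES_cond sum_W by simp
  next
    assume "R' \<in> ES X f \<and> R \<in> ES X (condf X R' f)"
    then have ins': "\<forall>W\<in>X // R'. inseparable W f" and icR': "ic (X // R') (quotf X R' f) = ic X f"
      and ins: "\<forall>Y\<in>X // R. inseparable Y f" and "?sum_classes = (\<Sum>W\<in>X // R'. ic W f)"
      using ES_R' ES_cond by auto
    then have ins_classes: "\<forall>W\<in>X // R'. inseparable (classes_in X R W) ?g"
      using sum_classes_iff sum_W by simp
    have "ic X f \<le> ic (X // R) ?g"
      using ic_le_ic_quotf[OF fin, of f R] f0 EW_iff[OF fin, of f] R ins by simp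
    moreover have "bar_rel X R R' \<in> EW (X // R) ?g"
      using EW_iff[of "X // R" ?g, OF finR g0] equiv_bar_rel[OF R R' finer] quotient_bar_rel[OF R R' finer]
        ins_classes by simp
    then have "ic (X // R) ?g \<le> ic (X // R') (quotf X R' f)"
      using ic_le_ic_quotf[of "X // R" ?g, OF finR g0] ic_quotf_bar_rel[OF R R' finer fin, of f] f0
      by metis
    ultimately show "R \<in> ES X f \<and> bar_rel X R R' \<in> ES (X // R) ?g"
      using ES_R ES_bar ins ins_classes icR' by simp
  qed
qed

lemma equiv_Id_on: "equiv X (Id_on X)"
  by (auto simp: equiv_def refl_on_def sym_def trans_def)

lemma quotient_Id_on: "X // Id_on X = (\<lambda>x. {x}) ` X"
  by (auto simp: quotient_def)

lemma Id_on_in_ES: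
  assumes fin: "finite X" and f0: "f {} = 0"
  shows "Id_on X \<in> ES X f"
proof -
  have "quotf X (Id_on X) f ((\<lambda>x. {x}) ` A) = f A" if "A \<subseteq> X" for A
    using quotf_eq[OF equiv_Id_on, of "(\<lambda>x. {x}) ` A" X f] that by (auto simp: quotient_Id_on)
  then have "ic ((\<lambda>x. {x}) ` X) (quotf X (Id_on X) f) = ic X f"
    using ic_image[of "\<lambda>x. {x}" X _ f, OF _ _ fin f0] by (auto simp: inj_on_def)
  then show ?thesis
    using ES_iff[OF fin, of f] f0 equiv_Id_on inseparable_singleton by (auto simp: quotient_Id_on)
qed

lemma
  assumes fin: "finite X" and f0: "f {} = 0"
  shows ic_rel_in_ES: "ic_rel X f \<in> ES X f"
    and modular_quotf_ic_rel: "modular (X // ic_rel X f) (quotf X (ic_rel X f) f)"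
proof -
  let ?K = "X // ic_rel X f" and ?g = "quotf X (ic_rel X f) f"
  have K: "equiv X (ic_rel X f)" and P: "component_partition X f ?K"
    using equiv_ic_rel[OF fin, of f] component_partition_ic_rel[OF fin, of f] f0 by auto
  have finK: "finite ?K" using finite_quotient[OF fin equiv_type[OF K]] .
  have g0: "?g {} = 0" using quotf_empty[of f, OF f0] .
  have "separator ?K ?g {C}" if "C \<in> ?K" for C
    using separator_quotf[OF K subset_refl, of "{C}" f] that P Union_quotient[OF K]
    by (simp add: component_partition_def)
  then have sep: "\<forall>C\<in>?K. separator ?K ?g {C}" by blast
  then show "modular ?K ?g" using modular_iff_singleton_separators[of ?K ?g, OF finK g0] by blast
  have "ic ?K ?g = ic X f"
    using ic_eq_card_if_singleton_separators[of ?K ?g, OF finK g0 sep] by (simp add: ic_def)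
  then show "ic_rel X f \<in> ES X f"
    using ES_iff[OF fin, of f] f0 K P by (simp add: component_partition_def)
qed

lemma modular_condf_iff:
  assumes fin: "finite X" and f0: "f {} = 0" and ES: "R \<in> ES X f"
  shows "modular X (condf X R f) \<longleftrightarrow> R = Id_on X"
proof -
  have R: "equiv X R" using ES ES_iff[OF fin, of f] f0 by blast
  have c0: "condf X R f {} = 0" using condf_empty[of f, OF f0] .
  show ?thesis
  proof
    assume "modular X (condf X R f)"
    then have "ic X (condf X R f) = card X"
      using modular_iff_singleton_separators[of X "condf X R f", OF fin c0]
        ic_eq_card_if_singleton_separators[of X "condf X R f", OF fin c0]
      by blast
    moreover have "ic X (condf X R f) = card (X // R)" using ES by (simp add: ES_def EW_def cl_def)
    moreover have "card (X // Id_on X) = card X"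
      by (simp add: quotient_Id_on card_image inj_on_def)
    moreover have "Id_on X \<subseteq> R" using R by (auto simp: equiv_def refl_on_def)
    ultimately show "R = Id_on X"
      using refinement_eq_if_card_quotient_le[OF equiv_Id_on R _ fin] by simp
  next
    assume "R = Id_on X"
    then have "\<forall>x\<in>X. separator X (condf X R f) {x}"
      using separator_condf[OF fin, of f, OF f0 R] quotient_Id_on by auto
    then show "modular X (condf X R f)"
      using modular_iff_singleton_separators[of X "condf X R f", OF fin c0] by blast
  qed
qed

lemma modular_quotf_iff:
  assumes fin: "finite X" and f0: "f {} = 0" and ES: "R \<in> ES X f"
  shows "modular (X // R) (quotf X R f) \<longleftrightarrow> R = ic_rel X f"
proof
  assume "modular (X // R) (quotf X R f)"
  have R: "equiv X R" and icq: "ic (X // R) (quotf X R f) = ic X f"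
    using ES ES_iff[OF fin, of f] f0 by auto
  have finR: "finite (X // R)" using finite_quotient[OF fin equiv_type[OF R]] .
  have g0: "quotf X R f {} = 0" using quotf_empty[of f, OF f0] .
  have "ic (X // R) (quotf X R f) = card (X // R)"
    using \<open>modular _ _\<close> modular_iff_singleton_separators[of "X // R" "quotf X R f", OF finR g0]
      ic_eq_card_if_singleton_separators[of "X // R" "quotf X R f", OF finR g0] by blast
  then have "card (X // R) \<le> card (X // ic_rel X f)" using icq by (simp add: ic_def)
  moreover have "R \<subseteq> ic_rel X f" using EW_subset_ic_rel[OF fin, of f, OF f0] ES by (simp add: ES_def)
  ultimately show "R = ic_rel X f"
    using refinement_eq_if_card_quotient_le[OF R equiv_ic_rel[OF fin, of f] _ fin] f0 by simp
qed (use modular_quotf_ic_rel[of X f, OF assms(1,2)] in simp)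

section \<open>Products\<close>

lemma part_rel_Un: "part_rel (P \<union> Q) = part_rel P \<union> part_rel Q"
  by (auto simp: part_rel_def)

lemma
  assumes "X \<inter> Y = {}" "equiv X RX" "equiv Y RY"
  shows equiv_Un: "equiv (X \<union> Y) (RX \<union> RY)"
    and quotient_Un: "(X \<union> Y) // (RX \<union> RY) = X // RX \<union> Y // RY"
proof -
  have P: "partition_on (X \<union> Y) (X // RX \<union> Y // RY)"
    using partition_on_Un[OF assms(1)] partition_on_quotient assms(2,3) by blast
  have "RX \<union> RY = part_rel (X // RX \<union> Y // RY)"
    using part_rel_quotient[OF assms(2)] part_rel_quotient[OF assms(3)] by (simp add: part_rel_Un)
  then show "equiv (X \<union> Y) (RX \<union> RY)" "(X \<union> Y) // (RX \<union> RY) = X // RX \<union> Y // RY"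
    using equiv_part_rel[OF P] quotient_part_rel[OF P] by simp_all
qed

context
  fixes X Y :: "'a set" and f g :: "'a set \<Rightarrow> int"
  assumes disj: "X \<inter> Y = {}" and f0: "f {} = 0" and g0: "g {} = 0"
begin

lemma star1_eq_left: "A \<subseteq> X \<Longrightarrow> star1 X Y f g A = f A"
proof -
  assume "A \<subseteq> X"
  then have "A \<inter> X = A" "A \<inter> Y = {}" "A \<subseteq> X \<union> Y" using disj by auto
  then show ?thesis using g0 by (simp add: star1_def)
qed

lemma star1_eq_right: "A \<subseteq> Y \<Longrightarrow> star1 X Y f g A = g A"
proof -
  assume "A \<subseteq> Y"
  then have "A \<inter> Y = A" "A \<inter> X = {}" "A \<subseteq> X \<union> Y" using disj by auto
  then show ?thesis using f0 by (simp add: star1_def)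
qed

lemma star1_empty: "star1 X Y f g {} = 0"
  using f0 g0 by (simp add: star1_def)

lemma separator_star1:
  "separator (X \<union> Y) (star1 X Y f g) X" "separator (X \<union> Y) (star1 X Y f g) Y"
proof -
  show sepX: "separator (X \<union> Y) (star1 X Y f g) X"
    unfolding separator_def
  proof (intro conjI allI impI)
    fix A assume A: "A \<subseteq> X \<union> Y"
    then have "A - X = A \<inter> Y" using disj by auto
    then show "star1 X Y f g A = star1 X Y f g (A \<inter> X) + star1 X Y f g (A - X)"
      using A star1_eq_left[of "A \<inter> X"] star1_eq_right[of "A \<inter> Y"] by (simp add: star1_def)
  qed simp
  have "X \<union> Y - X = Y" using disj by blast
  then show "separator (X \<union> Y) (star1 X Y f g) Y" using separator_Diff[OF sepX] by simp
qed

lemma inseparable_star1_iff: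
  "Z \<subseteq> X \<Longrightarrow> inseparable Z (star1 X Y f g) \<longleftrightarrow> inseparable Z f"
  "Z \<subseteq> Y \<Longrightarrow> inseparable Z (star1 X Y f g) \<longleftrightarrow> inseparable Z g"
  using star1_eq_left star1_eq_right by (auto intro!: inseparable_cong)

lemma ic_star1:
  assumes "finite X" "finite Y"
  shows "ic (X \<union> Y) (star1 X Y f g) = ic X f + ic Y g"
proof -
  have "ic (X \<union> Y) (star1 X Y f g) = ic X (star1 X Y f g) + ic (X \<union> Y - X) (star1 X Y f g)"
    using ic_split[of "X \<union> Y" "star1 X Y f g" X] assms star1_empty separator_star1 by simp
  also have "X \<union> Y - X = Y" using disj by auto
  finally show ?thesis using star1_eq_left star1_eq_right by (simp cong: ic_cong)
qed

lemma ic_quotf_star1: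
  assumes fin: "finite X" "finite Y" and RX: "equiv X RX" and RY: "equiv Y RY"
  shows "ic ((X \<union> Y) // (RX \<union> RY)) (quotf (X \<union> Y) (RX \<union> RY) (star1 X Y f g)) =
     ic (X // RX) (quotf X RX f) + ic (Y // RY) (quotf Y RY g)"
proof -
  let ?h = "star1 X Y f g" and ?R = "RX \<union> RY"
  let ?q = "quotf (X \<union> Y) ?R ?h"
  have R: "equiv (X \<union> Y) ?R" and quot: "(X \<union> Y) // ?R = X // RX \<union> Y // RY"
    using equiv_Un[OF disj RX RY] quotient_Un[OF disj RX RY] by auto
  have "separator ((X \<union> Y) // ?R) ?q (X // RX)"
    using separator_quotf[OF R subset_refl, of "X // RX" ?h] quot Union_quotient[OF R]
      Union_quotient[OF RX] separator_star1(1) by simp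
  moreover have "(X \<union> Y) // ?R - X // RX = Y // RY"
  proof -
    have "Z \<notin> X // RX" if "Z \<in> Y // RY" for Z
    proof
      assume "Z \<in> X // RX"
      then have "Z \<subseteq> X \<inter> Y" using in_quotient_imp_subset[OF RX] in_quotient_imp_subset[OF RY that]
        by blast
      then show False using disj in_quotient_imp_non_empty[OF RY that] by blast
    qed
    then show ?thesis unfolding quot by blast
  qed
  moreover have "finite ((X \<union> Y) // ?R)" using finite_quotient[OF _ equiv_type[OF R]] fin by simp
  ultimately have "ic ((X \<union> Y) // ?R) ?q = ic (X // RX) ?q + ic (Y // RY) ?q"
    using ic_split[of "(X \<union> Y) // ?R" ?q "X // RX"] quotf_empty[of ?h, OF star1_empty] by simp
  moreover have "?q B = quotf X RX f B" if "B \<subseteq> X // RX" for B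
  proof -
    have "\<Union>B \<subseteq> X" using that in_quotient_imp_subset[OF RX] by blast
    moreover have "B \<subseteq> (X \<union> Y) // ?R" using that quot by blast
    ultimately show ?thesis using quotf_eq[OF R] quotf_eq[OF RX that] star1_eq_left by simp
  qed
  moreover have "?q B = quotf Y RY g B" if "B \<subseteq> Y // RY" for B
  proof -
    have "\<Union>B \<subseteq> Y" using that in_quotient_imp_subset[OF RY] by blast
    moreover have "B \<subseteq> (X \<union> Y) // ?R" using that quot by blast
    ultimately show ?thesis using quotf_eq[OF R] quotf_eq[OF RY that] star1_eq_right by simp
  qed
  ultimately show ?thesis by (simp cong: ic_cong)
qed

end

theorem ES_star1:
  assumes fX: "finite X" and fY: "finite Y" and disj: "X \<inter> Y = {}"
    and f0: "f {} = 0" and g0: "g {} = 0"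
  shows "ES (X \<union> Y) (star1 X Y f g) = {RX \<union> RY | RX RY. RX \<in> ES X f \<and> RY \<in> ES Y g}"
proof -
  let ?h = "star1 X Y f g"
  have fU: "finite (X \<union> Y)" using fX fY by simp
  note ES_h = ES_iff[of "X \<union> Y" ?h, OF fU star1_empty[of X Y f g, OF disj f0 g0]]
  note ES_f = ES_iff[OF fX, of f] and ES_g = ES_iff[OF fY, of g]
  note ic_h = ic_star1[of X Y f g, OF disj f0 g0 fX fY]
  note ins_h = inseparable_star1_iff[of X Y f g, OF disj f0 g0]
  show ?thesis
  proof (intro equalityI subsetI)
    fix R assume "R \<in> {RX \<union> RY | RX RY. RX \<in> ES X f \<and> RY \<in> ES Y g}"
    then obtain RX RY where R: "R = RX \<union> RY" and "RX \<in> ES X f" "RY \<in> ES Y g" by blast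
    then have RX: "equiv X RX" "\<forall>Z\<in>X // RX. inseparable Z f" "ic (X // RX) (quotf X RX f) = ic X f"
      and RY: "equiv Y RY" "\<forall>Z\<in>Y // RY. inseparable Z g" "ic (Y // RY) (quotf Y RY g) = ic Y g"
      using ES_f ES_g f0 g0 by auto
    have "\<forall>Z\<in>(X \<union> Y) // R. inseparable Z ?h"
      using quotient_Un[OF disj RX(1) RY(1)] RX(2) RY(2) ins_h
        in_quotient_imp_subset[OF RX(1)] in_quotient_imp_subset[OF RY(1)] R by auto
    then show "R \<in> ES (X \<union> Y) ?h"
      using ES_h equiv_Un[OF disj RX(1) RY(1)] ic_quotf_star1[of X Y f g, OF disj f0 g0 fX fY RX(1) RY(1)]
        RX(3) RY(3) ic_h R by simp
  next
    fix R assume "R \<in> ES (X \<union> Y) ?h"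
    then have R: "equiv (X \<union> Y) R" and ins: "\<forall>Z\<in>(X \<union> Y) // R. inseparable Z ?h"
      and icq: "ic ((X \<union> Y) // R) (quotf (X \<union> Y) R ?h) = ic (X \<union> Y) ?h"
      using ES_h by auto
    have saturated: "Z \<subseteq> S \<or> Z \<inter> S = {}" if "Z \<in> (X \<union> Y) // R" "S = X \<or> S = Y" for Z S
      using inseparable_subset_or_disjoint[OF _ in_quotient_imp_subset[OF R that(1)]]
        separator_star1[of X Y f g, OF disj f0 g0] ins that by blast
    define RX where "RX = R \<inter> X \<times> X"
    define RY where "RY = R \<inter> Y \<times> Y"
    have RX: "equiv X RX" "X // RX = classes_in (X \<union> Y) R X"
      using equiv_restrict[OF R _ saturated] quotient_restrict[OF R _ saturated]
      unfolding RX_def by auto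
    have RY: "equiv Y RY" "Y // RY = classes_in (X \<union> Y) R Y"
      using equiv_restrict[OF R _ saturated] quotient_restrict[OF R _ saturated]
      unfolding RY_def by auto
    have "R \<subseteq> RX \<union> RY"
    proof
      fix p assume "p \<in> R"
      then obtain a b where p: "p = (a, b)" "(a, b) \<in> R" by (cases p) auto
      then have "a \<in> X \<union> Y" using equiv_type[OF R] by blast
      then have "R `` {a} \<in> (X \<union> Y) // R" "a \<in> R `` {a}" "b \<in> R `` {a}"
        using p(2) quotientI[of a "X \<union> Y" R] equiv_class_self[OF R] by auto
      then have "R `` {a} \<subseteq> X \<or> R `` {a} \<subseteq> Y"
        using saturated[of "R `` {a}" X] in_quotient_imp_subset[OF R] by blast
      then show "p \<in> RX \<union> RY" using \<open>a \<in> R `` {a}\<close> \<open>b \<in> R `` {a}\<close> p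
        by (auto simp: RX_def RY_def)
    qed
    then have RU: "R = RX \<union> RY" by (auto simp: RX_def RY_def)
    have insX: "\<forall>Z\<in>X // RX. inseparable Z f" and insY: "\<forall>Z\<in>Y // RY. inseparable Z g"
      using ins ins_h RX(2) RY(2) by (auto simp: classes_in_def)
    have "ic (X // RX) (quotf X RX f) + ic (Y // RY) (quotf Y RY g) = ic X f + ic Y g"
      using ic_quotf_star1[of X Y f g, OF disj f0 g0 fX fY RX(1) RY(1)] RU icq ic_h by simp
    moreover have "ic X f \<le> ic (X // RX) (quotf X RX f)"
      using ic_le_ic_quotf[OF fX, of f RX] f0 EW_iff[OF fX, of f] RX(1) insX by simp
    moreover have "ic Y g \<le> ic (Y // RY) (quotf Y RY g)"
      using ic_le_ic_quotf[OF fY, of g RY] g0 EW_iff[OF fY, of g] RY(1) insY by simp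
    ultimately have "RX \<in> ES X f" "RY \<in> ES Y g"
      using ES_f ES_g f0 g0 RX(1) RY(1) insX insY by auto
    then show "R \<in> {RX \<union> RY | RX RY. RX \<in> ES X f \<and> RY \<in> ES Y g}" using RU by blast
  qed
qed

section \<open>Counterexamples\<close>

lemma inseparable_doubleton:
  assumes "f {a, b} \<noteq> f {a} + f {b}"
  shows "inseparable {a, b} f"
  unfolding inseparable_def
proof (intro conjI allI impI)
  fix T assume T: "separator {a, b} f T"
  then have "a \<in> T \<longleftrightarrow> b \<in> T" using separator_mem_iff[OF T] assms by simp
  moreover have "T \<subseteq> {a, b}" using T by (simp add: separator_def)
  ultimately show "T = {} \<or> T = {a, b}" by blast
qed simp

lemma ic_doubleton:
  assumes ab: "a \<noteq> b" and q0: "q {} = 0" and additive: "q {a, b} = q {a} + q {b}"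
  shows "ic {a, b} q = 2"
proof -
  have "separator {a, b} q {x}" if "x \<in> {a, b}" for x
    unfolding separator_def
  proof (intro conjI allI impI)
    fix B assume "B \<subseteq> {a, b}"
    then have "B = {} \<or> B = {a} \<or> B = {b} \<or> B = {a, b}" by blast
    then show "q B = q (B \<inter> {x}) + q (B - {x})"
      using that ab q0 additive by (auto simp: insert_Diff_if)
  qed (use that in simp)
  then show ?thesis using ic_eq_card_if_singleton_separators[of "{a, b}" q] q0 ab by simp
qed

lemma
  assumes "X \<noteq> {}"
  shows equiv_Times_self: "equiv X (X \<times> X)"
    and quotient_Times_self: "X // (X \<times> X) = {X}"
proof -
  have "part_rel {X} = X \<times> X" by (auto simp: part_rel_def)
  then show "equiv X (X \<times> X)" "X // (X \<times> X) = {X}"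
    using equiv_part_rel[OF partition_on_space[OF assms]]
      quotient_part_rel[OF partition_on_space[OF assms]] by simp_all
qed

lemma Times_self_in_ES:
  assumes fin: "finite X" and f0: "f {} = 0" and ins: "inseparable X f"
  shows "X \<times> X \<in> ES X f"
proof -
  have ne: "X \<noteq> {}" using ins by (simp add: inseparable_def)
  have "ic {X} (quotf X (X \<times> X) f) = 1"
    using ic_eq_1_iff[of "{X}" "quotf X (X \<times> X) f"] inseparable_singleton quotf_empty[of f, OF f0]
    by simp
  moreover have "ic X f = 1" using ic_eq_1_iff[OF fin, of f] f0 ne ins by simp
  ultimately show ?thesis
    using ES_iff[OF fin, of f] f0 equiv_Times_self[OF ne] quotient_Times_self[OF ne] ins by simp
qed

text \<open>f1 is inseparable on {0, 1, 2}, but its quotient by {0, 1} | {2} is additive.\<close>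

definition f1 :: "nat set \<Rightarrow> int" where
  "f1 A = (if A \<subseteq> {0, 1, 2} \<and> 0 \<in> A \<and> (1 \<in> A \<or> 2 \<in> A) then 1 else 0)"

text \<open>
  f2 adds the coupling of 2 with 3: on {0, 1, 2} its quotient by {0, 1} | {2} is still additive,
  but on {0, 1, 2, 3} the class {3} connects the quotient by {0, 1} | {2} | {3}.
\<close>

definition f2 :: "nat set \<Rightarrow> int" where
  "f2 A = (if (A \<subseteq> {0, 1, 2} \<and> 0 \<in> A \<and> (1 \<in> A \<or> 2 \<in> A)) \<or> (2 \<in> A \<and> 3 \<in> A \<and> A \<subseteq> {2, 3})
     then 1 else 0)"

lemma inseparable_f1: "inseparable {0, 1, 2} f1"
  unfolding inseparable_def
proof (intro conjI allI impI)
  fix T assume T: "separator {0, 1, 2} f1 T"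
  have "0 \<in> T \<longleftrightarrow> 1 \<in> T" "0 \<in> T \<longleftrightarrow> 2 \<in> T"
    by (rule separator_mem_iff[OF T]; simp add: f1_def)+
  moreover have "T \<subseteq> {0, 1, 2}" using T by (simp add: separator_def)
  ultimately show "T = {} \<or> T = {0, 1, 2}" by auto
qed simp

lemma inseparable_f2_012: "inseparable {0, 1, 2} f2"
  unfolding inseparable_def
proof (intro conjI allI impI)
  fix T assume T: "separator {0, 1, 2} f2 T"
  have "0 \<in> T \<longleftrightarrow> 1 \<in> T" "0 \<in> T \<longleftrightarrow> 2 \<in> T"
    by (rule separator_mem_iff[OF T]; simp add: f2_def)+
  moreover have "T \<subseteq> {0, 1, 2}" using T by (simp add: separator_def)
  ultimately show "T = {} \<or> T = {0, 1, 2}" by auto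
qed simp

lemma inseparable_f2_0123: "inseparable {0, 1, 2, 3} f2"
  unfolding inseparable_def
proof (intro conjI allI impI)
  fix T assume T: "separator {0, 1, 2, 3} f2 T"
  have "0 \<in> T \<longleftrightarrow> 1 \<in> T" "0 \<in> T \<longleftrightarrow> 2 \<in> T" "2 \<in> T \<longleftrightarrow> 3 \<in> T"
    by (rule separator_mem_iff[OF T]; simp add: f2_def)+
  moreover have "T \<subseteq> {0, 1, 2, 3}" using T by (simp add: separator_def)
  ultimately show "T = {} \<or> T = {0, 1, 2, 3}" by auto
qed simp

lemma ex_ES_restr_not_ES_Un:
  "\<exists>(X::nat set) Y f RX RY. finite X \<and> finite Y \<and> X \<inter> Y = {} \<and> bool_fun (X \<union> Y) f \<and>
      RX \<in> ES X (restr f X) \<and> RY \<in> ES Y (restr f Y) \<and> RX \<union> RY \<notin> ES (X \<union> Y) f"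
proof (intro exI conjI)
  let ?X = "{0, 1} :: nat set" and ?Y = "{2} :: nat set"
  let ?R = "?X \<times> ?X \<union> Id_on ?Y"
  show "finite ?X" "finite ?Y" "?X \<inter> ?Y = {}" by auto
  show "bool_fun (?X \<union> ?Y) f1" by (auto simp: bool_fun_def f1_def)
  have "inseparable ?X (restr f1 ?X)"
    using inseparable_doubleton[of "restr f1 ?X" 0 1] by (simp add: restr_def f1_def)
  then show "?X \<times> ?X \<in> ES ?X (restr f1 ?X)" by (intro Times_self_in_ES) (auto simp: restr_def f1_def)
  show "Id_on ?Y \<in> ES ?Y (restr f1 ?Y)" by (intro Id_on_in_ES) (auto simp: restr_def f1_def)
  have RX: "equiv ?X (?X \<times> ?X)" and quotX: "?X // (?X \<times> ?X) = {?X}"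
    using equiv_Times_self[of ?X] quotient_Times_self[of ?X] by auto
  have RY: "equiv ?Y (Id_on ?Y)" by (rule equiv_Id_on)
  have R: "equiv (?X \<union> ?Y) ?R" and quot: "(?X \<union> ?Y) // ?R = {?X, ?Y}"
    using equiv_Un[of ?X ?Y, OF _ RX RY] quotient_Un[of ?X ?Y, OF _ RX RY] quotX
      quotient_Id_on[of ?Y] by auto
  let ?q = "quotf (?X \<union> ?Y) ?R f1"
  have q: "?q B = f1 (\<Union>B)" if "B \<subseteq> {?X, ?Y}" for B using quotf_eq[OF R] quot that by simp
  have "?q {} = 0" "?q {?X, ?Y} = 1" "?q {?X} = 1" "?q {?Y} = 0"
    using q[of "{}"] q[of "{?X, ?Y}"] q[of "{?X}"] q[of "{?Y}"] by (simp_all add: f1_def)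
  then have "ic {?X, ?Y} ?q = 2" by (intro ic_doubleton) simp_all
  moreover have "ic (?X \<union> ?Y) f1 = 1"
    using ic_eq_1_iff[of "?X \<union> ?Y" f1] inseparable_f1 by (simp add: f1_def insert_commute)
  ultimately show "?R \<notin> ES (?X \<union> ?Y) f1" using ES_iff[of "?X \<union> ?Y" f1] quot by (simp add: f1_def)
qed

lemma ex_ES_Un_not_ES_restr:
  "\<exists>(X::nat set) Y f RX RY. finite X \<and> finite Y \<and> X \<inter> Y = {} \<and> bool_fun (X \<union> Y) f \<and>
      equiv X RX \<and> equiv Y RY \<and> RX \<union> RY \<in> ES (X \<union> Y) f \<and> RX \<notin> ES X (restr f X)"
proof (intro exI conjI)
  let ?X = "{0, 1, 2} :: nat set" and ?Y = "{3} :: nat set"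
  let ?a = "{0, 1} :: nat set" and ?b = "{2} :: nat set" and ?c = "{3} :: nat set"
  let ?RX = "part_rel {?a, ?b}" and ?RY = "Id_on ?Y"
  have pX: "partition_on ?X {?a, ?b}" by (auto simp: partition_on_def pairwise_def disjnt_def)
  show "finite ?X" "finite ?Y" "?X \<inter> ?Y = {}" by auto
  show "bool_fun (?X \<union> ?Y) f2" by (auto simp: bool_fun_def f2_def)
  show RX: "equiv ?X ?RX" using equiv_part_rel[OF pX] .
  show RY: "equiv ?Y ?RY" by (rule equiv_Id_on)
  have quotX: "?X // ?RX = {?a, ?b}" using quotient_part_rel[OF pX] .
  have R: "equiv (?X \<union> ?Y) (?RX \<union> ?RY)" and quot: "(?X \<union> ?Y) // (?RX \<union> ?RY) = {?a, ?b, ?c}"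
    using equiv_Un[of ?X ?Y, OF _ RX RY] quotient_Un[of ?X ?Y, OF _ RX RY] quotX
      quotient_Id_on[of ?Y] by auto
  let ?q = "quotf (?X \<union> ?Y) (?RX \<union> ?RY) f2"
  have q: "?q B = f2 (\<Union>B)" if "B \<subseteq> {?a, ?b, ?c}" for B using quotf_eq[OF R] quot that by simp
  have "inseparable {?a, ?b, ?c} ?q"
    unfolding inseparable_def
  proof (intro conjI allI impI)
    fix T assume T: "separator {?a, ?b, ?c} ?q T"
    have "?q {?a, ?c} = 0" "?q {?a} = 1" "?q {?b, ?c} = 1" "?q {?b} = 0" "?q {?c} = 0"
      using q[of "{?a, ?c}"] q[of "{?a}"] q[of "{?b, ?c}"] q[of "{?b}"] q[of "{?c}"]
      by (simp_all add: f2_def)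
    then have "?a \<in> T \<longleftrightarrow> ?c \<in> T" "?b \<in> T \<longleftrightarrow> ?c \<in> T"
      by (intro separator_mem_iff[OF T]; simp)+
    moreover have "T \<subseteq> {?a, ?b, ?c}" using T by (simp add: separator_def)
    ultimately show "T = {} \<or> T = {?a, ?b, ?c}" by blast
  qed simp
  then have "ic {?a, ?b, ?c} ?q = ic (?X \<union> ?Y) f2"
    using ic_eq_1_iff[of "{?a, ?b, ?c}" ?q] ic_eq_1_iff[of "?X \<union> ?Y" f2] inseparable_f2_0123
      quotf_empty[of f2] by (simp add: f2_def insert_commute)
  moreover have "\<forall>Z\<in>{?a, ?b, ?c}. inseparable Z f2"
    using inseparable_doubleton[of f2 0 1] inseparable_singleton by (auto simp: f2_def)
  ultimately show "?RX \<union> ?RY \<in> ES (?X \<union> ?Y) f2"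
    using ES_iff[of "?X \<union> ?Y" f2] R quot by (simp add: f2_def)
  let ?qX = "quotf ?X ?RX (restr f2 ?X)"
  have qX: "?qX B = f2 (\<Union>B)" if "B \<subseteq> {?a, ?b}" for B
    using quotf_eq[OF RX, of B "restr f2 ?X"] quotX that by (auto simp: restr_def)
  have "?qX {} = 0" "?qX {?a, ?b} = 1" "?qX {?a} = 1" "?qX {?b} = 0"
    using qX[of "{}"] qX[of "{?a, ?b}"] qX[of "{?a}"] qX[of "{?b}"] by (simp_all add: f2_def)
  then have "ic {?a, ?b} ?qX = 2" by (intro ic_doubleton) simp_all
  moreover have "ic ?X (restr f2 ?X) = 1"
    using ic_cong[of ?X "restr f2 ?X" f2] ic_eq_1_iff[of ?X f2] inseparable_f2_012
    by (simp add: restr_def f2_def)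
  ultimately show "?RX \<notin> ES ?X (restr f2 ?X)"
    using ES_iff[of ?X "restr f2 ?X"] quotX by (simp add: restr_def f2_def)
qed

lemma bool_fun_empty: "bool_fun X f \<Longrightarrow> f {} = 0"
  by (simp add: bool_fun_def)

theorem theorem3p17:
  shows
  "(\<forall>(X::'a set) Y f g. finite X \<and> finite Y \<and> X \<inter> Y = {} \<and> bool_fun X f \<and> bool_fun Y g \<longrightarrow>
      ES (X \<union> Y) (star1 X Y f g) = {RX \<union> RY | RX RY. RX \<in> ES X f \<and> RY \<in> ES Y g})
   \<and>
   (\<forall>(X::'a set) f R R'. finite X \<and> bool_fun X f \<and> equiv X R \<and> equiv X R' \<and> R \<subseteq> R' \<longrightarrow>
      ((R \<in> ES X f \<and> bar_rel X R R' \<in> ES (X // R) (quotf X R f)) \<longleftrightarrow>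
       (R' \<in> ES X f \<and> R \<in> ES X (condf X R' f))))
   \<and>
   (\<forall>(X::'a set) f. finite X \<and> bool_fun X f \<longrightarrow>
      Id_on X \<in> ES X f \<and> ic_rel X f \<in> ES X f \<and>
      (\<forall>R\<in>ES X f. (modular X (condf X R f) \<longleftrightarrow> R = Id_on X) \<and>
                    (modular (X // R) (quotf X R f) \<longleftrightarrow> R = ic_rel X f)))
   \<and>
   (\<exists>(X::nat set) Y f RX RY. finite X \<and> finite Y \<and> X \<inter> Y = {} \<and> bool_fun (X \<union> Y) f \<and>
      RX \<in> ES X (restr f X) \<and> RY \<in> ES Y (restr f Y) \<and> RX \<union> RY \<notin> ES (X \<union> Y) f)
   \<and>
   (\<exists>(X::nat set) Y f RX RY. finite X \<and> finite Y \<and> X \<inter> Y = {} \<and> bool_fun (X \<union> Y) f \<and>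
      equiv X RX \<and> equiv Y RY \<and>
      RX \<union> RY \<in> ES (X \<union> Y) f \<and> RX \<notin> ES X (restr f X))"
proof (intro conjI allI impI ballI ex_ES_restr_not_ES_Un ex_ES_Un_not_ES_restr; (elim conjE)?)
qed (simp_all add: bool_fun_empty ES_star1 ES_refinement_iff Id_on_in_ES ic_rel_in_ES
    modular_condf_iff modular_quotf_iff)

end
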